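(* In the production planning setting described in the context (general case, intervals may overlap), the adversarial problem under $\mathcal{U}^d$ — given $\pmb{x}\in\mathbb{X}$, find $\pmb{D}\in\mathcal{U}^d$ maximizing $\sum_{t\in[T]}\max\{f_I(X_t,D_t),f_B(X_t,D_t)\}$ — can be solved in $O(T^4)$ time.
   Context: There are $T\ge 1$ periods, $[T]=\{1,\dots,T\}$. Given are a production cost $c^P$, an inventory cost $c^I$, a backordering cost $c^B$ and a selling price $b^P$ (independent of the period), and a set $\mathbb{X}\subseteq\mathbb{R}^T_+$ of feasible production plans $\pmb{x}=(x_1,\dots,x_T)$ described by finitely many linear constraints. For a plan write $X_t=\sum_{i\in[t]}x_i$. For $t\in[T-1]$ let $f_I(X_t,D_t)=c^I(X_t-D_t)$ and $f_B(X_t,D_t)=c^B(D_t-X_t)$; for $t=T$ let $f_I(X_T,D_T)=c^I(X_T-D_T)+c^PX_T-b^PD_T$ and $f_B(X_T,D_T)=c^B(D_T-X_T)+c^PX_T-b^PX_T$. Nominal cumulative demands $\widehat{D}_t\ge 0$ satisfy $\widehat{D}_t\le\widehat{D}_{t+1}$, and deviations satisfy $0\le\Delta_t\le\widehat{D}_t$. The discrete budgeted scenario set is $\mathcal{U}^d=\{\pmb{D}\in\mathbb{R}^T: D_t\le D_{t+1}\ (t\in[T-1]),\ D_t\in[\widehat{D}_t-\Delta_t,\widehat{D}_t+\Delta_t]\ (t\in[T]),\ |\{t: D_t\ne\widehat{D}_t\}|\le\Gamma^d\}$ with integer $\Gamma^d\in\{0,\dots,T\}$. No non-overlapping assumption on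 the intervals is made. *)

theory Defs
  imports Complex_Main
begin

text \<open>Vectors indexed by periods 1..T are functions nat => real; only the
values at t in {1..T} are relevant.\<close>

definition cumX :: "(nat \<Rightarrow> real) \<Rightarrow> nat \<Rightarrow> real" where
  "cumX x t = (\<Sum>i=1..t. x i)"

definition fI :: "nat \<Rightarrow> real \<Rightarrow> real \<Rightarrow> real \<Rightarrow> nat \<Rightarrow> real \<Rightarrow> real \<Rightarrow> real" where
  "fI T cP cI bP t X D =
     (if t = T then cI * (X - D) + cP * X - bP * D else cI * (X - D))"

definition fB :: "nat \<Rightarrow> real \<Rightarrow> real \<Rightarrow> real \<Rightarrow> nat \<Rightarrow> real \<Rightarrow> real \<Rightarrow> real" where
  "fB T cP cB bP t X D =
     (if t = T then cB * (D - X) + cP * X - bP * X else cB * (D - X))"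

definition adv_obj :: "nat \<Rightarrow> real \<Rightarrow> real \<Rightarrow> real \<Rightarrow> real \<Rightarrow> (nat \<Rightarrow> real) \<Rightarrow> (nat \<Rightarrow> real) \<Rightarrow> real" where
  "adv_obj T cP cI cB bP x D =
     (\<Sum>t=1..T. max (fI T cP cI bP t (cumX x t) (D t)) (fB T cP cB bP t (cumX x t) (D t)))"

definition Ud :: "nat \<Rightarrow> (nat \<Rightarrow> real) \<Rightarrow> (nat \<Rightarrow> real) \<Rightarrow> nat \<Rightarrow> (nat \<Rightarrow> real) set" where
  "Ud T Dhat Delta Gamma =
     {D. (\<forall>t\<in>{1..<T}. D t \<le> D (Suc t)) \<and>
         (\<forall>t\<in>{1..T}. Dhat t - Delta t \<le> D t \<and> D t \<le> Dhat t + Delta t) \<and>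
         card {t\<in>{1..T}. D t \<noteq> Dhat t} \<le> Gamma}"

text \<open>Memory is an int-indexed array of reals.  Each instruction costs one step.
Indirect addresses must be integers (no floor operation on arbitrary reals).\<close>

datatype instr =
    Const int int
  | Copy int int
  | AddI int int int
  | SubI int int int
  | MulI int int int
  | DivI int int int
  | LoadInd int int
  | StoreInd int int
  | JumpLe int int nat
  | Halt

type_synonym prog = "instr list"

datatype state = Running nat "int \<Rightarrow> real" | Halted "int \<Rightarrow> real" | Failed

fun exec_instr :: "instr \<Rightarrow> nat \<Rightarrow> (int \<Rightarrow> real) \<Rightarrow> state" where
  "exec_instr (Const a c) pc M = Running (Suc pc) (M(a := real_of_int c))"
| "exec_instr (Copy a b) pc M = Running (Suc pc) (M(a := M b))"
| "exec_instr (AddI a b c) pc M = Running (Suc pc) (M(a := M b + M c))"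
| "exec_instr (SubI a b c) pc M = Running (Suc pc) (M(a := M b - M c))"
| "exec_instr (MulI a b c) pc M = Running (Suc pc) (M(a := M b * M c))"
| "exec_instr (DivI a b c) pc M =
     (if M c = 0 then Failed else Running (Suc pc) (M(a := M b / M c)))"
| "exec_instr (LoadInd a b) pc M =
     (if M b \<in> \<int> then Running (Suc pc) (M(a := M \<lfloor>M b\<rfloor>)) else Failed)"
| "exec_instr (StoreInd a b) pc M =
     (if M a \<in> \<int> then Running (Suc pc) (M(\<lfloor>M a\<rfloor> := M b)) else Failed)"
| "exec_instr (JumpLe a b k) pc M =
     (if M a \<le> M b then Running k M else Running (Suc pc) M)"
| "exec_instr Halt pc M = Halted M"

fun step :: "prog \<Rightarrow> state \<Rightarrow> state" where
  "step P (Running pc M) = (if pc < length P then exec_instr (P ! pc) pc M else Failed)"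
| "step P (Halted M) = Halted M"
| "step P Failed = Failed"

definition run :: "prog \<Rightarrow> state \<Rightarrow> nat \<Rightarrow> state" where
  "run P s n = (step P ^^ n) s"

text \<open>Input encoding: M[0] = T, M[1] = c^P, M[2] = c^I, M[3] = c^B, M[4] = b^P,
M[5] = Gamma, and for t in 1..T: M[3t+3] = x_t, M[3t+4] = nominal D_t,
M[3t+5] = Delta_t; all other cells are 0.  Output: D_t is read from M[-t].\<close>

definition input_mem ::
  "nat \<Rightarrow> real \<Rightarrow> real \<Rightarrow> real \<Rightarrow> real \<Rightarrow> nat \<Rightarrow> (nat \<Rightarrow> real) \<Rightarrow> (nat \<Rightarrow> real) \<Rightarrow> (nat \<Rightarrow> real) \<Rightarrow> int \<Rightarrow> real" where
  "input_mem T cP cI cB bP Gamma x Dhat Delta = (\<lambda>a.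
     if a = 0 then real T
     else if a = 1 then cP
     else if a = 2 then cI
     else if a = 3 then cB
     else if a = 4 then bP
     else if a = 5 then real Gamma
     else if 6 \<le> a \<and> a \<le> 3 * int T + 5 then
       (let t = nat (a div 3 - 1) in
          if a mod 3 = 0 then x t else if a mod 3 = 1 then Dhat t else Delta t)
     else 0)"

definition output_scenario :: "(int \<Rightarrow> real) \<Rightarrow> nat \<Rightarrow> real" where
  "output_scenario M = (\<lambda>t. M (- int t))"

end

theory Submission
  imports Defs
begin

lemma max_convex_combination_le:
  fixes a b c d l :: real
  assumes "0 \<le> l" "l \<le> 1"
  shows "max (l * a + (1 - l) * b) (l * c + (1 - l) * d) \<le> l * max a c + (1 - l) * max b d"
proof -
  have "l * a \<le> l * max a c" "l * c \<le> l * max a c" using assms by (auto intro: mult_left_mono)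
  moreover have "(1 - l) * b \<le> (1 - l) * max b d" "(1 - l) * d \<le> (1 - l) * max b d"
    using assms by (auto intro: mult_left_mono)
  ultimately show ?thesis by (simp add: max_def)
qed

lemma exists_nearest_above:
  fixes \<alpha> :: real
  assumes "finite S" "s \<in> S" "\<alpha> < s"
  obtains \<beta> where "\<beta> \<in> S" "\<alpha> < \<beta>" "\<And>s. s \<in> S \<Longrightarrow> \<alpha> < s \<Longrightarrow> \<beta> \<le> s"
proof
  let ?U = "{s \<in> S. \<alpha> < s}"
  have "finite ?U" "?U \<noteq> {}" using assms by auto
  then show "Min ?U \<in> S" "\<alpha> < Min ?U" "\<And>s. s \<in> S \<Longrightarrow> \<alpha> < s \<Longrightarrow> Min ?U \<le> s"
    using Min_in[of ?U] by auto
qed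

lemma exists_nearest_below:
  fixes \<alpha> :: real
  assumes "finite S" "s \<in> S" "s < \<alpha>"
  obtains \<gamma> where "\<gamma> \<in> S" "\<gamma> < \<alpha>" "\<And>s. s \<in> S \<Longrightarrow> s < \<alpha> \<Longrightarrow> s \<le> \<gamma>"
proof
  let ?L = "{s \<in> S. s < \<alpha>}"
  have "finite ?L" "?L \<noteq> {}" using assms by auto
  then show "Max ?L \<in> S" "Max ?L < \<alpha>" "\<And>s. s \<in> S \<Longrightarrow> s < \<alpha> \<Longrightarrow> s \<le> Max ?L"
    using Max_in[of ?L] by auto
qed

text \<open>The
  result is a triple of reals (found flag, maximum, maximiser), as stored in RAM memory.\<close>

fun scan_best :: "(nat \<Rightarrow> real) \<Rightarrow> (nat \<Rightarrow> real) \<Rightarrow> (nat \<Rightarrow> real) \<Rightarrow> real \<Rightarrow> nat \<Rightarrow> real \<times> real \<times> real" where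
  "scan_best c bd vl cv 0 = (0, 0, 0)"
| "scan_best c bd vl cv (Suc w) = (case scan_best c bd vl cv w of (f, b, a) \<Rightarrow>
     if c w \<le> cv \<and> bd w \<le> 0 \<and> (f \<le> 0 \<or> \<not> vl w \<le> b) then (1, vl w, real w) else (f, b, a))"

lemma scan_best_spec:
  "((\<forall>w<n. \<not> (c w \<le> cv \<and> bd w \<le> 0)) \<and> scan_best c bd vl cv n = (0, 0, 0)) \<or>
   (\<exists>w<n. c w \<le> cv \<and> bd w \<le> 0 \<and> scan_best c bd vl cv n = (1, vl w, real w) \<and>
      (\<forall>w'<n. c w' \<le> cv \<and> bd w' \<le> 0 \<longrightarrow> vl w' \<le> vl w))"
proof (induction n)
  case 0
  then show ?case by simp
next
  case (Suc n)
  show ?case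
  proof (cases "c n \<le> cv \<and> bd n \<le> 0")
    case False
    then show ?thesis using Suc.IH by (auto simp: less_Suc_eq)
  next
    case adm: True
    from Suc.IH consider (none) "\<forall>w<n. \<not> (c w \<le> cv \<and> bd w \<le> 0)" "scan_best c bd vl cv n = (0, 0, 0)"
      | (best) w where "w < n" "c w \<le> cv \<and> bd w \<le> 0" "scan_best c bd vl cv n = (1, vl w, real w)"
          "\<forall>w'<n. c w' \<le> cv \<and> bd w' \<le> 0 \<longrightarrow> vl w' \<le> vl w"
      by blast
    then show ?thesis
    proof cases
      case none
      then show ?thesis using adm by (auto simp: less_Suc_eq)
    next
      case (best w)
      then show ?thesis using adm
        by (cases "vl n \<le> vl w") (auto simp: less_Suc_eq intro!: exI[of _ w] exI[of _ n])
    qed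
  qed
qed

lemma scan_best_cases:
  obtains (none) "\<And>w. w < n \<Longrightarrow> c w \<le> cv \<Longrightarrow> \<not> bd w \<le> 0" "scan_best c bd vl cv n = (0, 0, 0)"
  | (best) w where "w < n" "c w \<le> cv" "bd w \<le> 0" "scan_best c bd vl cv n = (1, vl w, real w)"
      "\<And>w'. w' < n \<Longrightarrow> c w' \<le> cv \<Longrightarrow> bd w' \<le> 0 \<Longrightarrow> vl w' \<le> vl w"
  using scan_best_spec[of n c cv bd vl] by blast

definition replace_value :: "(nat \<Rightarrow> real) \<Rightarrow> real \<Rightarrow> real \<Rightarrow> nat \<Rightarrow> real" where
  "replace_value D \<alpha> \<beta> t = (if D t = \<alpha> then \<beta> else D t)"

locale production_instance =
  fixes T :: nat and cP cI cB bP :: real and Gamma :: nat and x Dhat Delta :: "nat \<Rightarrow> real"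
  assumes T_pos: "1 \<le> T" and Gamma_le: "Gamma \<le> T"
    and Dhat_nonneg: "\<forall>t\<in>{1..T}. 0 \<le> Dhat t"
    and Dhat_mono: "\<forall>t\<in>{1..<T}. Dhat t \<le> Dhat (Suc t)"
    and Delta_bounds: "\<forall>t\<in>{1..T}. 0 \<le> Delta t \<and> Delta t \<le> Dhat t"
begin

abbreviation scenarios :: "(nat \<Rightarrow> real) set" where
  "scenarios \<equiv> Ud T Dhat Delta Gamma"

abbreviation obj :: "(nat \<Rightarrow> real) \<Rightarrow> real" where
  "obj D \<equiv> adv_obj T cP cI cB bP x D"

definition lo :: "nat \<Rightarrow> real" where "lo t = Dhat t - Delta t"
definition hi :: "nat \<Rightarrow> real" where "hi t = Dhat t + Delta t"

definition cost :: "nat \<Rightarrow> real \<Rightarrow> real" where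
  "cost t d = max (fI T cP cI bP t (cumX x t) d) (fB T cP cB bP t (cumX x t) d)"

lemma obj_eq_sum_cost: "obj D = (\<Sum>t=1..T. cost t (D t))"
  by (simp add: adv_obj_def cost_def)

lemma cost_convex: "0 \<le> l \<Longrightarrow> l \<le> 1 \<Longrightarrow> cost t (l * u + (1 - l) * w) \<le> l * cost t u + (1 - l) * cost t w"
proof -
  assume l: "0 \<le> l" "l \<le> 1"
  have "fI T cP cI bP t X (l * u + (1 - l) * w) = l * fI T cP cI bP t X u + (1 - l) * fI T cP cI bP t X w"
    "fB T cP cB bP t X (l * u + (1 - l) * w) = l * fB T cP cB bP t X u + (1 - l) * fB T cP cB bP t X w" for X
    by (simp_all add: fI_def fB_def algebra_simps)
  then show ?thesis unfolding cost_def using max_convex_combination_le[OF l] by presburger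
qed

definition ncand :: nat where "ncand = 3 * T"

definition cand :: "nat \<Rightarrow> real" where
  "cand v = (if v mod 3 = 0 then lo (v div 3 + 1)
             else if v mod 3 = 1 then Dhat (v div 3 + 1) else hi (v div 3 + 1))"

lemma cand_triple [simp]: "cand (3 * s) = lo (Suc s)" "cand (3 * s + 1) = Dhat (Suc s)" "cand (3 * s + 2) = hi (Suc s)"
proof -
  have "(3 * s + 1) div 3 = s" "(3 * s + 1) mod 3 = 1" "(3 * s + 2) div 3 = s" "(3 * s + 2) mod 3 = 2"
    by presburger+
  then show "cand (3 * s) = lo (Suc s)" "cand (3 * s + 1) = Dhat (Suc s)" "cand (3 * s + 2) = hi (Suc s)"
    unfolding cand_def by auto
qed

lemma ncand_pos: "0 < ncand"
  using T_pos by (simp add: ncand_def)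

lemma cand_le_sum_hi: "w < ncand \<Longrightarrow> cand w \<le> (\<Sum>t=1..T. hi t)"
proof -
  assume w: "w < ncand"
  define s where "s = w div 3 + 1"
  have s: "s \<in> {1..T}" using w by (auto simp: s_def ncand_def)
  have "cand w \<le> hi s" using Delta_bounds s unfolding cand_def s_def lo_def hi_def by auto
  also have "\<dots> \<le> (\<Sum>t=1..T. hi t)"
    using s Dhat_nonneg Delta_bounds by (intro member_le_sum) (auto simp: hi_def)
  finally show ?thesis .
qed

definition dev :: "nat \<Rightarrow> nat \<Rightarrow> nat" where
  "dev t v = (if cand v = Dhat t then 0 else 1)"

text \<open>\<open>dp t v k\<close> describes the candidate sequences for periods \<open>1..t\<close> that end in candidate \<open>v\<close>
  and deviate from the nominal demand at most \<open>k\<close> times: it is the triple (0, maximal cost,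
  candidate at period \<open>t - 1\<close> of a maximiser), or (1, 0, 0) if there is no such sequence.  The
  flag 0 means feasible so that the all-zero memory holds the layer \<open>t = 0\<close>.\<close>

fun dp :: "nat \<Rightarrow> nat \<Rightarrow> nat \<Rightarrow> real \<times> real \<times> real" where
  "dp 0 v k = (0, 0, 0)"
| "dp (Suc t) v k = (if lo (Suc t) \<le> cand v \<and> cand v \<le> hi (Suc t) \<and> dev (Suc t) v \<le> k then
      (case scan_best cand (\<lambda>w. fst (dp t w (k - dev (Suc t) v))) (\<lambda>w. fst (snd (dp t w (k - dev (Suc t) v))))
              (cand v) ncand of
         (f, b, a) \<Rightarrow> if f \<le> 0 then (1, 0, 0) else (0, cost (Suc t) (cand v) + b, a))
     else (1, 0, 0))"

fun backtrack :: "nat \<Rightarrow> nat \<Rightarrow> nat \<Rightarrow> nat \<Rightarrow> nat" where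
  "backtrack 0 v k = (\<lambda>i. v)"
| "backtrack (Suc t) v k =
     (backtrack t (nat \<lfloor>snd (snd (dp (Suc t) v k))\<rfloor>) (k - dev (Suc t) v))(Suc t := v)"

lemma dp_pos:
  "1 \<le> t \<Longrightarrow> dp t v k = (if lo t \<le> cand v \<and> cand v \<le> hi t \<and> dev t v \<le> k then
      (case scan_best cand (\<lambda>w. fst (dp (t - 1) w (k - dev t v))) (\<lambda>w. fst (snd (dp (t - 1) w (k - dev t v))))
              (cand v) ncand of
         (f, b, a) \<Rightarrow> if f \<le> 0 then (1, 0, 0) else (0, cost t (cand v) + b, a))
     else (1, 0, 0))"
  by (cases t) (auto split: prod.split)

lemma backtrack_last [simp]: "backtrack t v k t = v"
  by (cases t) auto

definition feasible_seq :: "nat \<Rightarrow> (nat \<Rightarrow> nat) \<Rightarrow> nat \<Rightarrow> bool" where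
  "feasible_seq t s k \<longleftrightarrow> (\<forall>i\<in>{1..t}. s i < ncand \<and> lo i \<le> cand (s i) \<and> cand (s i) \<le> hi i) \<and>
     (\<forall>i\<in>{1..<t}. cand (s i) \<le> cand (s (Suc i))) \<and> card {i\<in>{1..t}. cand (s i) \<noteq> Dhat i} \<le> k"

definition seq_cost :: "nat \<Rightarrow> (nat \<Rightarrow> nat) \<Rightarrow> real" where
  "seq_cost t s = (\<Sum>i=1..t. cost i (cand (s i)))"

lemma seq_cost_Suc: "seq_cost (Suc t) s = seq_cost t s + cost (Suc t) (cand (s (Suc t)))"
  by (simp add: seq_cost_def)

lemma feasible_seq_Suc:
  "feasible_seq (Suc t) s k \<longleftrightarrow> feasible_seq t s (k - dev (Suc t) (s (Suc t))) \<and> dev (Suc t) (s (Suc t)) \<le> k \<and>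
     s (Suc t) < ncand \<and> lo (Suc t) \<le> cand (s (Suc t)) \<and> cand (s (Suc t)) \<le> hi (Suc t) \<and>
     (1 \<le> t \<longrightarrow> cand (s t) \<le> cand (s (Suc t)))"
proof -
  let ?d = "dev (Suc t) (s (Suc t))"
  have "{i\<in>{1..Suc t}. cand (s i) \<noteq> Dhat i} =
      {i\<in>{1..t}. cand (s i) \<noteq> Dhat i} \<union> (if ?d = 1 then {Suc t} else {})"
    by (auto simp: le_Suc_eq dev_def)
  then have "card {i\<in>{1..Suc t}. cand (s i) \<noteq> Dhat i} = card {i\<in>{1..t}. cand (s i) \<noteq> Dhat i} + ?d"
    by (auto simp: dev_def)
  then have "card {i\<in>{1..Suc t}. cand (s i) \<noteq> Dhat i} \<le> k \<longleftrightarrow>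
      card {i\<in>{1..t}. cand (s i) \<noteq> Dhat i} \<le> k - ?d \<and> ?d \<le> k"
    by (auto simp: dev_def)
  moreover have "(\<forall>i\<in>{1..<Suc t}. cand (s i) \<le> cand (s (Suc i))) \<longleftrightarrow>
      (\<forall>i\<in>{1..<t}. cand (s i) \<le> cand (s (Suc i))) \<and> (1 \<le> t \<longrightarrow> cand (s t) \<le> cand (s (Suc t)))"
    by (auto simp: less_Suc_eq)
  ultimately show ?thesis
    unfolding feasible_seq_def by (auto simp: le_Suc_eq)
qed

lemma feasible_seq_cong:
  "(\<And>i. 1 \<le> i \<Longrightarrow> i \<le> t \<Longrightarrow> s i = s' i) \<Longrightarrow> feasible_seq t s k = feasible_seq t s' k"
  unfolding feasible_seq_def
  by (intro arg_cong2[where f = "(\<and>)"] arg_cong2[where f = "(\<le>)"] arg_cong[where f = card]) auto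

lemma seq_cost_cong: "(\<And>i. 1 \<le> i \<Longrightarrow> i \<le> t \<Longrightarrow> s i = s' i) \<Longrightarrow> seq_cost t s = seq_cost t s'"
  unfolding seq_cost_def by (rule sum.cong) auto

text \<open>A feasible sequence ending in \<open>v\<close> at period \<open>t + 1\<close> comes from an admissible predecessor
  state of \<open>dp t\<close>; for \<open>t = 0\<close> the (irrelevant) predecessor is \<open>v\<close> itself.\<close>

lemma feasible_seq_SucE:
  assumes "feasible_seq (Suc t) s k" "s (Suc t) = v" "v < ncand"
  obtains w s' where "w < ncand" "cand w \<le> cand v" "feasible_seq t s' (k - dev (Suc t) v)" "s' t = w"
    "seq_cost t s' = seq_cost t s"
proof
  define w where "w = (if t = 0 then v else s t)"
  show "feasible_seq t (s(t := w)) (k - dev (Suc t) v)"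
    using assms(1,2) feasible_seq_cong[of t s "s(t := w)"] by (auto simp: feasible_seq_Suc w_def)
  show "seq_cost t (s(t := w)) = seq_cost t s"
    by (rule seq_cost_cong) (auto simp: w_def)
  show "w < ncand" "cand w \<le> cand v"
    using assms unfolding feasible_seq_Suc by (auto simp: w_def feasible_seq_def)
qed simp

definition dp_correct :: "nat \<Rightarrow> nat \<Rightarrow> nat \<Rightarrow> bool" where
  "dp_correct t v k \<longleftrightarrow> (fst (dp t v k) = 0 \<or> fst (dp t v k) = 1) \<and>
     (\<exists>w<ncand. snd (snd (dp t v k)) = real w) \<and>
     (fst (dp t v k) \<le> 0 \<longleftrightarrow> (\<exists>s. feasible_seq t s k \<and> s t = v)) \<and>
     (fst (dp t v k) \<le> 0 \<longrightarrow> feasible_seq t (backtrack t v k) k \<and>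
        seq_cost t (backtrack t v k) = fst (snd (dp t v k)) \<and>
        (\<forall>s. feasible_seq t s k \<and> s t = v \<longrightarrow> seq_cost t s \<le> fst (snd (dp t v k))))"

lemma dp_correct_0: "dp_correct 0 v k"
  unfolding dp_correct_def using ncand_pos
  by (auto simp: seq_cost_def feasible_seq_def intro!: exI[of _ 0] exI[of _ "\<lambda>i. v"])

lemma dp_correct_infeasible:
  "dp t v k = (1, 0, 0) \<Longrightarrow> \<not> (\<exists>s. feasible_seq t s k \<and> s t = v) \<Longrightarrow> dp_correct t v k"
  unfolding dp_correct_def using ncand_pos by (auto intro!: exI[of _ 0])

lemma dp_predecessor:
  assumes IH: "\<And>w k'. w < ncand \<Longrightarrow> dp_correct t w k'"
    and s: "feasible_seq (Suc t) s k" "s (Suc t) = v" and v: "v < ncand"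
  obtains w where "w < ncand" "cand w \<le> cand v" "fst (dp t w (k - dev (Suc t) v)) \<le> 0"
    "seq_cost t s \<le> fst (snd (dp t w (k - dev (Suc t) v)))"
proof -
  obtain w s' where "w < ncand" "cand w \<le> cand v" "feasible_seq t s' (k - dev (Suc t) v)" "s' t = w"
    "seq_cost t s' = seq_cost t s"
    using feasible_seq_SucE[OF s v] by blast
  then show thesis using that IH[of w "k - dev (Suc t) v"] unfolding dp_correct_def by metis
qed

lemma dp_correct_Suc:
  assumes IH: "\<And>w k'. w < ncand \<Longrightarrow> dp_correct t w k'" and v: "v < ncand"
  shows "dp_correct (Suc t) v k"
proof -
  define k' where "k' = k - dev (Suc t) v"
  define bd where "bd = (\<lambda>w. fst (dp t w k'))"
  define vl where "vl = (\<lambda>w. fst (snd (dp t w k')))"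
  have pred: "\<exists>w<ncand. cand w \<le> cand v \<and> bd w \<le> 0 \<and> seq_cost t s \<le> vl w"
    if "feasible_seq (Suc t) s k" "s (Suc t) = v" for s
    using dp_predecessor[OF IH that v] unfolding k'_def bd_def vl_def by blast
  show ?thesis
  proof (cases "lo (Suc t) \<le> cand v \<and> cand v \<le> hi (Suc t) \<and> dev (Suc t) v \<le> k")
    case False
    then show ?thesis by (intro dp_correct_infeasible) (auto simp: feasible_seq_Suc)
  next
    case ok: True
    then have dp_eq: "dp (Suc t) v k = (case scan_best cand bd vl (cand v) ncand of
        (f, b, a) \<Rightarrow> if f \<le> 0 then (1, 0, 0) else (0, cost (Suc t) (cand v) + b, a))"
      by (simp add: k'_def bd_def vl_def)
    show ?thesis
    proof (cases rule: scan_best_cases[of ncand cand "cand v" bd vl])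
      case none
      then show ?thesis using pred dp_eq by (intro dp_correct_infeasible) force+
    next
      case (best w)
      have w: "dp_correct t w k'" "bd w \<le> 0" using IH[OF best(1)] best(3) by auto
      define s where "s = (backtrack t w k')(Suc t := v)"
      have bt: "backtrack (Suc t) v k = s" "nat \<lfloor>real w\<rfloor> = w" using dp_eq best(4) by (simp_all add: s_def k'_def)
      have "feasible_seq t s k'" "seq_cost t s = vl w"
        using w feasible_seq_cong[of t "backtrack t w k'" s] seq_cost_cong[of t "backtrack t w k'" s]
        unfolding dp_correct_def bd_def vl_def by (auto simp: s_def)
      then have s: "feasible_seq (Suc t) s k" "seq_cost (Suc t) s = cost (Suc t) (cand v) + vl w"
        using ok v best(2) by (auto simp: feasible_seq_Suc seq_cost_Suc s_def k'_def)
      have "seq_cost (Suc t) s' \<le> cost (Suc t) (cand v) + vl w"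
        if "feasible_seq (Suc t) s' k" "s' (Suc t) = v" for s'
        using pred[OF that] best(5) that(2) by (force simp: seq_cost_Suc)
      then show ?thesis using dp_eq best(1,4) s bt unfolding dp_correct_def by (auto simp: s_def)
    qed
  qed
qed

lemma dp_correct: "v < ncand \<Longrightarrow> dp_correct t v k"
  by (induction t arbitrary: v k) (auto intro: dp_correct_0 dp_correct_Suc)

lemma dp_feasible_predecessor:
  assumes t: "1 \<le> t" and v: "v < ncand" and feasible: "fst (dp t v k) \<le> 0"
  obtains w where "w < ncand" "snd (snd (dp t v k)) = real w" "dev t v \<le> k" "fst (dp (t - 1) w (k - dev t v)) \<le> 0"
    "\<And>i. i \<le> t - 1 \<Longrightarrow> backtrack t v k i = backtrack (t - 1) w (k - dev t v) i"
proof -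
  obtain w where w: "w < ncand" "snd (snd (dp t v k)) = real w"
    using dp_correct[OF v] unfolding dp_correct_def by blast
  obtain t' where t': "t = Suc t'" using t by (cases t) auto
  have bt: "backtrack t v k i = backtrack t' w (k - dev t v) i" if "i \<le> t'" for i
    using that w(2) unfolding t' by simp
  have "feasible_seq t (backtrack t v k) k" using dp_correct[OF v] feasible unfolding dp_correct_def by blast
  then have "feasible_seq t' (backtrack t v k) (k - dev t v)" "dev t v \<le> k"
    unfolding t' feasible_seq_Suc by (simp_all del: backtrack.simps)
  then have "feasible_seq t' (backtrack t' w (k - dev t v)) (k - dev t v)"
    using feasible_seq_cong[of t' "backtrack t v k" "backtrack t' w (k - dev t v)"] bt by simp
  then have "fst (dp t' w (k - dev t v)) \<le> 0"
    using dp_correct[OF w(1)] backtrack_last unfolding dp_correct_def by blast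
  then show thesis using that w \<open>dev t v \<le> k\<close> bt unfolding t' by simp
qed


definition cand_values :: "real set" where
  "cand_values = cand ` {..<ncand}"

lemma demand_bounds_in_cand_values:
  assumes "t \<in> {1..T}"
  shows "lo t \<in> cand_values" "Dhat t \<in> cand_values" "hi t \<in> cand_values"
proof -
  obtain s where s: "t = Suc s" "s < T" using assms by (cases t) auto
  then have "3 * s < ncand" "3 * s + 1 < ncand" "3 * s + 2 < ncand" by (auto simp: ncand_def)
  then show "lo t \<in> cand_values" "Dhat t \<in> cand_values" "hi t \<in> cand_values"
    unfolding cand_values_def s(1) by (metis cand_triple image_eqI lessThan_iff)+
qed

definition off_cand :: "(nat \<Rightarrow> real) \<Rightarrow> real set" where
  "off_cand D = D ` {1..T} - cand_values"

lemma replace_value_in_scenarios: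
  assumes D: "D \<in> scenarios" and \<alpha>: "\<alpha> \<notin> cand_values"
    and bounds: "\<And>t. t \<in> {1..T} \<Longrightarrow> D t = \<alpha> \<Longrightarrow> lo t \<le> \<beta> \<and> \<beta> \<le> hi t"
    and gap: "\<And>s. s \<in> {1..T} \<Longrightarrow> (\<alpha> < D s \<longrightarrow> \<beta> \<le> D s) \<and> (D s < \<alpha> \<longrightarrow> D s \<le> \<beta>)"
  shows "replace_value D \<alpha> \<beta> \<in> scenarios"
proof -
  let ?D = "replace_value D \<alpha> \<beta>"
  have mono: "\<forall>t\<in>{1..<T}. D t \<le> D (Suc t)" and bds: "\<forall>t\<in>{1..T}. lo t \<le> D t \<and> D t \<le> hi t"
    and card: "card {t\<in>{1..T}. D t \<noteq> Dhat t} \<le> Gamma"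
    using D by (auto simp: Ud_def lo_def hi_def)
  have "?D t \<le> ?D (Suc t)" if t: "t \<in> {1..<T}" for t
  proof -
    have "D t \<le> D (Suc t)" "D (Suc t) \<noteq> \<alpha> \<Longrightarrow> \<alpha> < D (Suc t) \<Longrightarrow> \<beta> \<le> D (Suc t)"
      "D t \<noteq> \<alpha> \<Longrightarrow> D t < \<alpha> \<Longrightarrow> D t \<le> \<beta>"
      using mono gap t by auto
    then show ?thesis unfolding replace_value_def by (cases "D t = \<alpha>"; cases "D (Suc t) = \<alpha>") auto
  qed
  moreover have "lo t \<le> ?D t \<and> ?D t \<le> hi t" if "t \<in> {1..T}" for t
    using bds bounds that by (auto simp: replace_value_def)
  moreover have "{t\<in>{1..T}. ?D t \<noteq> Dhat t} \<subseteq> {t\<in>{1..T}. D t \<noteq> Dhat t}"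
    using \<alpha> demand_bounds_in_cand_values(2) by (auto simp: replace_value_def)
  then have "card {t\<in>{1..T}. ?D t \<noteq> Dhat t} \<le> card {t\<in>{1..T}. D t \<noteq> Dhat t}"
    by (intro card_mono) auto
  ultimately show ?thesis using card unfolding Ud_def lo_def hi_def by auto
qed

lemma off_cand_replace_value:
  assumes "\<alpha> \<in> off_cand D" "\<beta> \<noteq> \<alpha>" "\<beta> \<in> cand_values \<union> D ` {1..T}"
  shows "off_cand (replace_value D \<alpha> \<beta>) \<subset> off_cand D"
proof -
  have "off_cand (replace_value D \<alpha> \<beta>) \<subseteq> off_cand D"
    using assms(3) by (auto simp: off_cand_def replace_value_def)
  moreover have "\<alpha> \<notin> off_cand (replace_value D \<alpha> \<beta>)"
    using assms(2) by (auto simp: off_cand_def replace_value_def)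
  ultimately show ?thesis using assms(1) by blast
qed

lemma off_cand_value_inside:
  assumes "D \<in> scenarios" "\<alpha> \<notin> cand_values" "t \<in> {1..T}" "D t = \<alpha>"
  shows "lo t < \<alpha> \<and> \<alpha> < hi t"
proof -
  have "lo t \<le> D t" "D t \<le> hi t" using assms(1,3) by (auto simp: Ud_def lo_def hi_def)
  moreover have "lo t \<noteq> \<alpha>" "hi t \<noteq> \<alpha>" using assms(2) demand_bounds_in_cand_values[OF assms(3)] by auto
  ultimately show ?thesis using assms(4) by auto
qed

lemma obj_replace_value_convex:
  assumes l: "0 \<le> l" "l \<le> 1" and \<alpha>: "\<alpha> = l * \<gamma> + (1 - l) * \<beta>"
  shows "obj D \<le> l * obj (replace_value D \<alpha> \<gamma>) + (1 - l) * obj (replace_value D \<alpha> \<beta>)"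
proof -
  have "cost t (D t) \<le> l * cost t (replace_value D \<alpha> \<gamma> t) + (1 - l) * cost t (replace_value D \<alpha> \<beta> t)" for t
  proof (cases "D t = \<alpha>")
    case True
    then show ?thesis using cost_convex[OF l, of t \<gamma> \<beta>] \<alpha> by (simp add: replace_value_def)
  next
    case False
    then show ?thesis by (simp add: replace_value_def algebra_simps)
  qed
  then have "obj D \<le> (\<Sum>t=1..T. l * cost t (replace_value D \<alpha> \<gamma> t) + (1 - l) * cost t (replace_value D \<alpha> \<beta> t))"
    unfolding obj_eq_sum_cost by (rule sum_mono)
  then show ?thesis by (simp add: obj_eq_sum_cost sum.distrib sum_distrib_left)
qed

lemma obj_le_replace_value_either:
  assumes "\<gamma> < \<alpha>" "\<alpha> < \<beta>"
  shows "obj D \<le> obj (replace_value D \<alpha> \<gamma>) \<or> obj D \<le> obj (replace_value D \<alpha> \<beta>)"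
proof (rule ccontr)
  define l where "l = (\<beta> - \<alpha>) / (\<beta> - \<gamma>)"
  have "l * (\<beta> - \<gamma>) = \<beta> - \<alpha>" using assms by (simp add: l_def)
  moreover have "(1 - l) * \<beta> = \<beta> - l * \<beta>" "l * (\<beta> - \<gamma>) = l * \<beta> - l * \<gamma>"
    by (simp_all add: algebra_simps)
  ultimately have "\<alpha> = l * \<gamma> + (1 - l) * \<beta>" by linarith
  moreover have "0 \<le> l" "l \<le> 1" using assms by (auto simp: l_def divide_simps)
  ultimately have l: "0 \<le> l" "l \<le> 1" "\<alpha> = l * \<gamma> + (1 - l) * \<beta>" by auto
  assume "\<not> (obj D \<le> obj (replace_value D \<alpha> \<gamma>) \<or> obj D \<le> obj (replace_value D \<alpha> \<beta>))"
  then have "l * obj (replace_value D \<alpha> \<gamma>) + (1 - l) * obj (replace_value D \<alpha> \<beta>) < obj D"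
    by (intro convex_bound_lt) (use l in auto)
  then show False using obj_replace_value_convex[OF l, of D] by linarith
qed

text \<open>All periods sharing a demand value \<open>\<alpha>\<close> outside the candidate set can be moved together to the
  nearest breakpoint above or below \<open>\<alpha>\<close>; \<open>\<alpha>\<close> is a convex combination of the two, so by
  convexity of the costs one of the moves does not decrease the objective.\<close>

lemma improve_off_cand_value:
  assumes D: "D \<in> scenarios" and \<alpha>: "\<alpha> \<in> off_cand D"
  obtains D' where "D' \<in> scenarios" "obj D \<le> obj D'" "off_cand D' \<subset> off_cand D"
proof -
  have \<alpha>V: "\<alpha> \<notin> cand_values" and "\<alpha> \<in> D ` {1..T}" using \<alpha> by (auto simp: off_cand_def)
  then obtain t0 where t0: "t0 \<in> {1..T}" "D t0 = \<alpha>" by auto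
  note inside = off_cand_value_inside[OF D \<alpha>V]
  let ?B = "{t\<in>{1..T}. D t = \<alpha>}"
  obtain \<beta> where \<beta>: "\<beta> \<in> hi ` ?B \<union> D ` {1..T}" "\<alpha> < \<beta>"
    "\<And>s. s \<in> hi ` ?B \<union> D ` {1..T} \<Longrightarrow> \<alpha> < s \<Longrightarrow> \<beta> \<le> s"
    using exists_nearest_above[of "hi ` ?B \<union> D ` {1..T}" "hi t0" \<alpha>] t0 inside by auto
  obtain \<gamma> where \<gamma>: "\<gamma> \<in> lo ` ?B \<union> D ` {1..T}" "\<gamma> < \<alpha>"
    "\<And>s. s \<in> lo ` ?B \<union> D ` {1..T} \<Longrightarrow> s < \<alpha> \<Longrightarrow> s \<le> \<gamma>"
    using exists_nearest_below[of "lo ` ?B \<union> D ` {1..T}" "lo t0" \<alpha>] t0 inside by auto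
  have "replace_value D \<alpha> \<beta> \<in> scenarios"
  proof (rule replace_value_in_scenarios[OF D \<alpha>V])
    show "lo t \<le> \<beta> \<and> \<beta> \<le> hi t" if "t \<in> {1..T}" "D t = \<alpha>" for t
      using inside[OF that] \<beta>(2) \<beta>(3)[of "hi t"] that by auto
    show "(\<alpha> < D s \<longrightarrow> \<beta> \<le> D s) \<and> (D s < \<alpha> \<longrightarrow> D s \<le> \<beta>)" if "s \<in> {1..T}" for s
      using \<beta>(2) \<beta>(3)[of "D s"] that by auto
  qed
  moreover have "replace_value D \<alpha> \<gamma> \<in> scenarios"
  proof (rule replace_value_in_scenarios[OF D \<alpha>V])
    show "lo t \<le> \<gamma> \<and> \<gamma> \<le> hi t" if "t \<in> {1..T}" "D t = \<alpha>" for t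
      using inside[OF that] \<gamma>(2) \<gamma>(3)[of "lo t"] that by auto
    show "(\<alpha> < D s \<longrightarrow> \<gamma> \<le> D s) \<and> (D s < \<alpha> \<longrightarrow> D s \<le> \<gamma>)" if "s \<in> {1..T}" for s
      using \<gamma>(2) \<gamma>(3)[of "D s"] that by auto
  qed
  moreover have "off_cand (replace_value D \<alpha> \<beta>) \<subset> off_cand D" "off_cand (replace_value D \<alpha> \<gamma>) \<subset> off_cand D"
    using \<beta>(1,2) \<gamma>(1,2) demand_bounds_in_cand_values(1,3)
    by (auto intro!: off_cand_replace_value[OF \<alpha>])
  moreover have "obj D \<le> obj (replace_value D \<alpha> \<gamma>) \<or> obj D \<le> obj (replace_value D \<alpha> \<beta>)"
    using obj_le_replace_value_either[OF \<gamma>(2) \<beta>(2)] .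
  ultimately show thesis using that by blast
qed

lemma exists_optimal_on_cand_values:
  "D \<in> scenarios \<Longrightarrow> \<exists>D'\<in>scenarios. obj D \<le> obj D' \<and> off_cand D' = {}"
proof (induction D rule: measure_induct_rule[where f = "\<lambda>D. card (off_cand D)"])
  case (less D)
  show ?case
  proof (cases "off_cand D = {}")
    case True
    then show ?thesis using less.prems by blast
  next
    case False
    then obtain D1 where D1: "D1 \<in> scenarios" "obj D \<le> obj D1" "off_cand D1 \<subset> off_cand D"
      using improve_off_cand_value[OF less.prems] by blast
    have "card (off_cand D1) < card (off_cand D)"
      using D1(3) by (intro psubset_card_mono) (auto simp: off_cand_def)
    then obtain D2 where "D2 \<in> scenarios" "obj D1 \<le> obj D2" "off_cand D2 = {}"
      using less.IH D1(1) by blast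
    then show ?thesis using D1(2) by (blast intro: order_trans)
  qed
qed

lemma seq_to_scenario:
  assumes "feasible_seq T s Gamma" "\<forall>t\<in>{1..T}. D t = cand (s t)"
  shows "D \<in> scenarios" "obj D = seq_cost T s"
proof -
  have "{t\<in>{1..T}. D t \<noteq> Dhat t} = {t\<in>{1..T}. cand (s t) \<noteq> Dhat t}" using assms(2) by auto
  then show "D \<in> scenarios" using assms unfolding feasible_seq_def Ud_def by (auto simp: lo_def hi_def)
  show "obj D = seq_cost T s" unfolding obj_eq_sum_cost seq_cost_def by (rule sum.cong) (auto simp: assms(2))
qed

lemma scenario_to_seq:
  assumes D: "D \<in> scenarios"
  obtains s where "feasible_seq T s Gamma" "obj D \<le> seq_cost T s"
proof -
  obtain D' where D': "D' \<in> scenarios" "obj D \<le> obj D'" "off_cand D' = {}"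
    using exists_optimal_on_cand_values[OF D] by blast
  define s where "s = (\<lambda>t. SOME v. v < ncand \<and> cand v = D' t)"
  have s: "s t < ncand \<and> cand (s t) = D' t" if "t \<in> {1..T}" for t
  proof -
    have "D' t \<in> cand_values" using D'(3) that unfolding off_cand_def by blast
    then have "\<exists>v. v < ncand \<and> cand v = D' t" unfolding cand_values_def by auto
    then show ?thesis unfolding s_def by (rule someI_ex)
  qed
  have "{t\<in>{1..T}. cand (s t) \<noteq> Dhat t} = {t\<in>{1..T}. D' t \<noteq> Dhat t}" using s by auto
  then have "feasible_seq T s Gamma" using D'(1) s unfolding feasible_seq_def Ud_def by (auto simp: lo_def hi_def)
  moreover have "obj D' = seq_cost T s" using seq_to_scenario(2)[OF calculation] s by simp
  ultimately show thesis using that D'(2) by simp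
qed

lemma nominal_seq_feasible: "feasible_seq T (\<lambda>t. 3 * (t - 1) + 1) Gamma"
proof -
  let ?s = "\<lambda>t. 3 * (t - 1) + 1"
  have nominal: "cand (?s t) = Dhat t" if "1 \<le> t" for t
    using that cand_triple(2)[of "t - 1"] by simp
  have "{t\<in>{1..T}. cand (?s t) \<noteq> Dhat t} = {}" using nominal by auto
  then have "card {t\<in>{1..T}. cand (?s t) \<noteq> Dhat t} \<le> Gamma" by (simp only: card.empty le0)
  moreover have "cand (?s i) \<le> cand (?s (Suc i))" if "i \<in> {1..<T}" for i
    using nominal[of i] nominal[of "Suc i"] Dhat_mono that by simp
  moreover have "\<forall>i\<in>{1..T}. ?s i < ncand \<and> lo i \<le> cand (?s i) \<and> cand (?s i) \<le> hi i"
    using nominal Delta_bounds by (auto simp: ncand_def lo_def hi_def)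
  ultimately show ?thesis unfolding feasible_seq_def by blast
qed

definition optimal_last :: "nat \<Rightarrow> bool" where
  "optimal_last ws \<longleftrightarrow> ws < ncand \<and> fst (dp T ws Gamma) \<le> 0 \<and>
     (\<forall>s. feasible_seq T s Gamma \<longrightarrow> seq_cost T s \<le> fst (snd (dp T ws Gamma)))"

lemma scan_best_optimal_last:
  assumes "scan_best cand (\<lambda>w. fst (dp T w Gamma)) (\<lambda>w. fst (snd (dp T w Gamma))) (\<Sum>t=1..T. hi t) ncand = (f, b, a)"
  obtains ws where "optimal_last ws" "a = real ws"
proof -
  have "3 * (T - 1) + 1 < ncand" using T_pos by (simp add: ncand_def)
  moreover have "fst (dp T (3 * (T - 1) + 1) Gamma) \<le> 0"
    using dp_correct[OF calculation] nominal_seq_feasible unfolding dp_correct_def by blast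
  ultimately show thesis
  proof (cases rule: scan_best_cases[of ncand cand "\<Sum>t=1..T. hi t" "\<lambda>w. fst (dp T w Gamma)" "\<lambda>w. fst (snd (dp T w Gamma))"])
    case none
    then show ?thesis using \<open>3 * (T - 1) + 1 < ncand\<close> \<open>fst (dp T (3 * (T - 1) + 1) Gamma) \<le> 0\<close> cand_le_sum_hi by blast
  next
    case (best ws)
    have "seq_cost T s \<le> fst (snd (dp T ws Gamma))" if s: "feasible_seq T s Gamma" for s
    proof -
      have sT: "s T < ncand" using s T_pos unfolding feasible_seq_def by auto
      then have "fst (dp T (s T) Gamma) \<le> 0" "seq_cost T s \<le> fst (snd (dp T (s T) Gamma))"
        using dp_correct[OF sT, of T Gamma] s unfolding dp_correct_def by blast+
      then show ?thesis using best(5)[OF sT] cand_le_sum_hi[OF sT] by linarith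
    qed
    then show ?thesis using that best assms unfolding optimal_last_def by auto
  qed
qed

lemma optimal_last_backtrack:
  assumes "optimal_last ws" "\<forall>t\<in>{1..T}. D' t = cand (backtrack T ws Gamma t)"
  shows "D' \<in> scenarios" "\<forall>D\<in>scenarios. obj D \<le> obj D'"
proof -
  have ws: "feasible_seq T (backtrack T ws Gamma) Gamma"
    "seq_cost T (backtrack T ws Gamma) = fst (snd (dp T ws Gamma))"
    using assms(1) dp_correct[of ws T Gamma] unfolding optimal_last_def dp_correct_def by blast+
  show "D' \<in> scenarios" using seq_to_scenario(1)[OF ws(1) assms(2)] .
  show "\<forall>D\<in>scenarios. obj D \<le> obj D'"
  proof
    fix D assume "D \<in> scenarios"
    then obtain s where "feasible_seq T s Gamma" "obj D \<le> seq_cost T s" by (rule scenario_to_seq)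
    then show "obj D \<le> obj D'"
      using assms(1) seq_to_scenario(2)[OF ws(1) assms(2)] ws(2) unfolding optimal_last_def by force
  qed
qed

end


lemma run_Suc: "run P s (Suc n) = run P (step P s) n"
  unfolding run_def funpow_Suc_right by simp

lemma run_add: "run P s (m + n) = run P (run P s m) n"
  unfolding run_def by (metis funpow_add add.commute comp_apply)

definition reaches_within :: "prog \<Rightarrow> nat \<Rightarrow> (int \<Rightarrow> real) \<Rightarrow> nat \<Rightarrow> (nat \<Rightarrow> (int \<Rightarrow> real) \<Rightarrow> bool) \<Rightarrow> bool" where
  "reaches_within P pc M b Q \<longleftrightarrow> (\<exists>n pc' M'. run P (Running pc M) n = Running pc' M' \<and> n \<le> b \<and> Q pc' M')"

lemma reaches_within_mono:
  "reaches_within P pc M b Q \<Longrightarrow> b \<le> b' \<Longrightarrow> (\<And>pc M. Q pc M \<Longrightarrow> Q' pc M) \<Longrightarrow> reaches_within P pc M b' Q'"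
  unfolding reaches_within_def by (meson order_trans)

lemma reaches_within_trans:
  assumes "reaches_within P pc M b1 Q1" "\<And>pc' M'. Q1 pc' M' \<Longrightarrow> reaches_within P pc' M' b2 Q"
  shows "reaches_within P pc M (b1 + b2) Q"
proof -
  obtain n1 pc1 M1 where 1: "run P (Running pc M) n1 = Running pc1 M1" "n1 \<le> b1" "Q1 pc1 M1"
    using assms(1) unfolding reaches_within_def by blast
  obtain n2 pc2 M2 where 2: "run P (Running pc1 M1) n2 = Running pc2 M2" "n2 \<le> b2" "Q pc2 M2"
    using assms(2)[OF 1(3)] unfolding reaches_within_def by blast
  have "run P (Running pc M) (n1 + n2) = Running pc2 M2" using 1(1) 2(1) by (simp add: run_add)
  moreover have "n1 + n2 \<le> b1 + b2" using 1(2) 2(2) by simp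
  ultimately show ?thesis unfolding reaches_within_def using 2(3) by blast
qed

lemma reaches_within_loop:
  assumes body: "\<And>i M. i < n \<Longrightarrow> I i M \<Longrightarrow> reaches_within P h M b (\<lambda>pc M'. pc = h \<and> I (Suc i) M')"
    and exit: "\<And>M. I n M \<Longrightarrow> reaches_within P h M c Q"
  shows "I 0 M \<Longrightarrow> reaches_within P h M (n * b + c) Q"
proof -
  have "I (n - m) M \<Longrightarrow> m \<le> n \<Longrightarrow> reaches_within P h M (m * b + c) Q" for m M
  proof (induction m arbitrary: M)
    case 0
    then show ?case using exit by simp
  next
    case (Suc m)
    have "reaches_within P h M b (\<lambda>pc M'. pc = h \<and> I (n - m) M')"
      using body[of "n - Suc m" M] Suc.prems Suc_diff_Suc by fastforce
    then have "reaches_within P h M (b + (m * b + c)) Q"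
      by (rule reaches_within_trans) (use Suc.IH Suc.prems in auto)
    then show ?case by (simp add: algebra_simps)
  qed
  from this[of n] show "I 0 M \<Longrightarrow> reaches_within P h M (n * b + c) Q" by simp
qed

text \<open>Unfolded by the simplifier, \<open>exec_until\<close> executes straight-line code symbolically until it
  first reaches one of the program points in \<open>H\<close>.\<close>

fun exec_until :: "prog \<Rightarrow> nat list \<Rightarrow> nat \<Rightarrow> (int \<Rightarrow> real) \<Rightarrow> nat \<Rightarrow> (nat \<Rightarrow> (int \<Rightarrow> real) \<Rightarrow> bool) \<Rightarrow> bool" where
  "exec_until P H pc M 0 R = False"
| "exec_until P H pc M (Suc b) R = (pc < length P \<and> (case exec_instr (P ! pc) pc M of
      Running pc' M' \<Rightarrow> (if pc' \<in> set H then R pc' M' else exec_until P H pc' M' b R)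
    | Halted M' \<Rightarrow> False | Failed \<Rightarrow> False))"

lemma exec_until_unfold: "0 < b \<Longrightarrow> exec_until P H pc M b R = (pc < length P \<and> (case exec_instr (P ! pc) pc M of
      Running pc' M' \<Rightarrow> (if pc' \<in> set H then R pc' M' else exec_until P H pc' M' (b - 1) R)
    | Halted M' \<Rightarrow> False | Failed \<Rightarrow> False))"
  by (cases b) (simp_all only: exec_until.simps diff_Suc_1)

lemma exec_until_reaches_within:
  assumes "exec_until P H pc M b R" "\<And>pc' M'. pc' \<in> set H \<Longrightarrow> R pc' M' \<Longrightarrow> Q pc' M'"
  shows "reaches_within P pc M b Q"
proof -
  have "reaches_within P pc M b (\<lambda>pc' M'. pc' \<in> set H \<and> R pc' M')"
    using assms(1)
  proof (induction b arbitrary: pc M)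
    case 0
    then show ?case by simp
  next
    case (Suc b)
    then have step: "step P (Running pc M) = exec_instr (P ! pc) pc M" by simp
    show ?case
    proof (cases "exec_instr (P ! pc) pc M")
      case (Running pc' M')
      show ?thesis
      proof (cases "pc' \<in> set H")
        case True
        moreover have "run P (Running pc M) 1 = Running pc' M'" using Running step by (simp add: run_def)
        ultimately show ?thesis using Suc.prems Running unfolding reaches_within_def by force
      next
        case False
        then have "reaches_within P pc' M' b (\<lambda>pc' M'. pc' \<in> set H \<and> R pc' M')"
          using Suc.prems Running by (intro Suc.IH) simp
        then show ?thesis using step Running unfolding reaches_within_def
          by (metis Suc_le_mono run_Suc)
      qed
    qed (use Suc.prems in simp_all)
  qed
  then show ?thesis using assms(2) reaches_within_mono by blast
qed

lemma exec_until_then: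
  assumes "exec_until P H pc M b R" "\<And>pc' M'. pc' \<in> set H \<Longrightarrow> R pc' M' \<Longrightarrow> reaches_within P pc' M' b' Q"
  shows "reaches_within P pc M (b + b') Q"
  by (rule reaches_within_trans[OF exec_until_reaches_within[OF assms(1)]]) (use assms(2) in auto)

text \<open>Constants: \<open>-1..-6\<close> hold \<open>T, c\<^sup>P, c\<^sup>I, c\<^sup>B, b\<^sup>P, \<Gamma>\<close>;
  \<open>-7, -8, -9\<close> hold 1, 0, 3; \<open>-10\<close> the number \<open>3T\<close> of candidates, \<open>-11\<close> the number \<open>T + 1\<close> of
  budgets, \<open>-12\<close> and \<open>-16\<close> the table strides of a candidate and of a period; \<open>-13, -15, -14\<close> the
  bases of the candidate array, of the backtracked scenario and of the table.  The table cell of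
  \<open>(t, v, k)\<close> has number \<open>(3T t + v)(T + 1) + k\<close> and occupies three consecutive words.  Loop
  state: \<open>-24, -25, -26\<close> the current \<open>(t, v, k)\<close>, \<open>-27\<close> the cell address, \<open>-28\<close> the base of
  layer \<open>t - 1\<close>, \<open>-29\<close> the cumulative production \<open>X\<^sub>t\<close>, \<open>-30, -31, -32\<close> the bounds \<open>lo, hi\<close> and
  \<open>Dhat\<close> of period \<open>t\<close>; the scan keeps its triple in \<open>-40, -41, -42\<close>.  The output overwrites
  the registers, so the last phase runs on the cells 0 to 5.  Program points: 22 candidate loop,
  47 table loop, 72 predecessor scan, 116 and 121 store a cell and advance, 141 final scan, 155
  backtracking loop, 188 output loop.\<close>

lemma floor_of_nat_mult: "\<lfloor>real a * real b\<rfloor> = int a * int b"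
  by (metis floor_of_nat of_nat_mult)

lemma floor_numeral_mult_of_nat: "\<lfloor>numeral n * real b\<rfloor> = numeral n * int b"
  by (metis floor_of_nat of_nat_mult of_nat_numeral)

lemma floor_minus_of_nat: "\<lfloor>- real n\<rfloor> = - int n"
  by (metis floor_of_int of_int_minus of_int_of_nat_eq)

lemma nonneg_neq_neg_numeral: "(0::int) \<le> x \<Longrightarrow> (x = - numeral k) = False"
  by auto

lemma neg_eq_nonneg_iff: "a < 0 \<Longrightarrow> (0::int) \<le> x \<Longrightarrow> (a = x) = False"
  by auto

definition adversary_ram :: prog where
  "adversary_ram = [
    Copy (-1) 0,
    Copy (-2) 1,
    Copy (-3) 2,
    Copy (-4) 3,
    Copy (-5) 4,
    Copy (-6) 5,
    Const (-7) 1,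
    Const (-8) 0,
    Const (-9) 3,
    MulI (-10) (-9) (-1),
    AddI (-11) (-1) (-7),
    MulI (-12) (-9) (-11),
    MulI (-13) (-9) (-1),
    Const (-22) 6,
    AddI (-13) (-13) (-22),
    AddI (-15) (-13) (-10),
    AddI (-14) (-15) (-11),
    MulI (-16) (-10) (-12),
    Const (-17) 1,
    Const (-18) 7,
    Copy (-19) (-13),
    Const (-23) 0,
    JumpLe (-17) (-1) 24,
    JumpLe (-8) (-8) 39,
    LoadInd (-20) (-18),
    AddI (-22) (-18) (-7),
    LoadInd (-21) (-22),
    SubI (-22) (-20) (-21),
    StoreInd (-19) (-22),
    AddI (-19) (-19) (-7),
    StoreInd (-19) (-20),
    AddI (-19) (-19) (-7),
    AddI (-22) (-20) (-21),
    StoreInd (-19) (-22),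
    AddI (-19) (-19) (-7),
    AddI (-23) (-23) (-22),
    AddI (-17) (-17) (-7),
    AddI (-18) (-18) (-9),
    JumpLe (-8) (-8) 22,
    Const (-24) 0,
    Const (-25) 0,
    Const (-26) 0,
    AddI (-27) (-14) (-16),
    SubI (-28) (-14) (-16),
    Const (-33) 3,
    Const (-29) 0,
    JumpLe (-8) (-8) 128,
    JumpLe (-24) (-1) 49,
    JumpLe (-8) (-8) 141,
    AddI (-44) (-13) (-25),
    LoadInd (-34) (-44),
    JumpLe (-30) (-34) 53,
    JumpLe (-8) (-8) 116,
    JumpLe (-34) (-31) 55,
    JumpLe (-8) (-8) 116,
    Const (-35) 1,
    JumpLe (-34) (-32) 58,
    JumpLe (-8) (-8) 61,
    JumpLe (-32) (-34) 60,
    JumpLe (-8) (-8) 61,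
    Const (-35) 0,
    SubI (-36) (-26) (-35),
    JumpLe (-8) (-36) 64,
    JumpLe (-8) (-8) 116,
    MulI (-44) (-9) (-36),
    AddI (-37) (-28) (-44),
    Const (-38) 0,
    Copy (-39) (-13),
    Const (-40) 0,
    Const (-41) 0,
    Const (-42) 0,
    Const (-43) 0,
    JumpLe (-10) (-38) 90,
    LoadInd (-49) (-39),
    JumpLe (-49) (-34) 76,
    JumpLe (-8) (-8) 86,
    LoadInd (-50) (-37),
    JumpLe (-50) (-8) 79,
    JumpLe (-8) (-8) 86,
    AddI (-44) (-37) (-7),
    LoadInd (-51) (-44),
    JumpLe (-40) (-8) 83,
    JumpLe (-51) (-41) 86,
    Copy (-40) (-7),
    Copy (-41) (-51),
    Copy (-42) (-38),
    AddI (-38) (-38) (-7),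
    AddI (-39) (-39) (-7),
    AddI (-37) (-37) (-12),
    JumpLe (-8) (-8) 72,
    JumpLe (-43) (-8) 92,
    JumpLe (-8) (-8) 151,
    JumpLe (-40) (-8) 116,
    SubI (-44) (-29) (-34),
    MulI (-46) (-3) (-44),
    SubI (-44) (-34) (-29),
    MulI (-47) (-4) (-44),
    JumpLe (-1) (-24) 99,
    JumpLe (-8) (-8) 106,
    MulI (-44) (-2) (-29),
    AddI (-46) (-46) (-44),
    AddI (-47) (-47) (-44),
    MulI (-44) (-5) (-34),
    SubI (-46) (-46) (-44),
    MulI (-44) (-5) (-29),
    SubI (-47) (-47) (-44),
    Copy (-48) (-46),
    JumpLe (-47) (-46) 109,
    Copy (-48) (-47),
    AddI (-44) (-48) (-41),
    StoreInd (-27) (-8),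
    AddI (-45) (-27) (-7),
    StoreInd (-45) (-44),
    AddI (-45) (-45) (-7),
    StoreInd (-45) (-42),
    JumpLe (-8) (-8) 121,
    StoreInd (-27) (-7),
    AddI (-45) (-27) (-7),
    StoreInd (-45) (-8),
    AddI (-45) (-45) (-7),
    StoreInd (-45) (-8),
    AddI (-27) (-27) (-9),
    AddI (-26) (-26) (-7),
    JumpLe (-26) (-1) 47,
    Const (-26) 0,
    AddI (-25) (-25) (-7),
    JumpLe (-10) (-25) 128,
    JumpLe (-8) (-8) 47,
    Const (-25) 0,
    AddI (-24) (-24) (-7),
    AddI (-28) (-28) (-16),
    AddI (-33) (-33) (-9),
    LoadInd (-44) (-33),
    AddI (-29) (-29) (-44),
    AddI (-44) (-33) (-7),
    LoadInd (-32) (-44),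
    AddI (-44) (-44) (-7),
    LoadInd (-45) (-44),
    SubI (-30) (-32) (-45),
    AddI (-31) (-32) (-45),
    JumpLe (-8) (-8) 47,
    MulI (-44) (-9) (-6),
    AddI (-37) (-28) (-44),
    Copy (-34) (-23),
    Const (-38) 0,
    Copy (-39) (-13),
    Const (-40) 0,
    Const (-41) 0,
    Const (-42) 0,
    Const (-43) 1,
    JumpLe (-8) (-8) 72,
    Copy (-24) (-1),
    Copy (-26) (-6),
    Copy (-25) (-42),
    AddI (-52) (-15) (-1),
    JumpLe (-7) (-24) 157,
    JumpLe (-8) (-8) 183,
    MulI (-53) (-24) (-10),
    AddI (-53) (-53) (-25),
    MulI (-53) (-53) (-11),
    AddI (-53) (-53) (-26),
    MulI (-53) (-53) (-9),
    AddI (-53) (-53) (-14),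
    AddI (-44) (-13) (-25),
    LoadInd (-34) (-44),
    MulI (-44) (-9) (-24),
    Const (-45) 4,
    AddI (-44) (-44) (-45),
    LoadInd (-32) (-44),
    Const (-35) 1,
    JumpLe (-34) (-32) 172,
    JumpLe (-8) (-8) 175,
    JumpLe (-32) (-34) 174,
    JumpLe (-8) (-8) 175,
    Const (-35) 0,
    AddI (-44) (-53) (-7),
    AddI (-44) (-44) (-7),
    LoadInd (-25) (-44),
    SubI (-26) (-26) (-35),
    StoreInd (-52) (-34),
    SubI (-24) (-24) (-7),
    SubI (-52) (-52) (-7),
    JumpLe (-8) (-8) 155,
    Copy 1 (-1),
    AddI 2 (-15) (-7),
    Const 4 1,
    Const 0 1,
    Const 5 (-1),
    JumpLe 0 1 190,
    JumpLe 4 4 196,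
    LoadInd 3 2,
    StoreInd 5 3,
    AddI 0 0 4,
    AddI 2 2 4,
    SubI 5 5 4,
    JumpLe 4 4 188,
    Halt]"

lemmas ram_exec_simps = exec_until_unfold adversary_ram_def floor_of_nat_mult floor_numeral_mult_of_nat
  floor_minus_of_nat nonneg_neq_neg_numeral

lemma ram_setup:
  fixes M :: "int \<Rightarrow> real"
  assumes "M 0 = real T" "M 1 = cP" "M 2 = cI" "M 3 = cB" "M 4 = bP" "M 5 = real G"
  shows "exec_until adversary_ram [22] 0 M 32 (\<lambda>pc M'. M' (-1) = real T \<and> M' (-2) = cP \<and> M' (-3) = cI \<and>
    M' (-4) = cB \<and> M' (-5) = bP \<and> M' (-6) = real G \<and> M' (-7) = 1 \<and> M' (-8) = 0 \<and> M' (-9) = 3 \<and>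
    M' (-10) = real (3 * T) \<and> M' (-11) = real (T + 1) \<and> M' (-12) = real (3 * (T + 1)) \<and>
    M' (-13) = real (3 * T + 6) \<and> M' (-15) = real (3 * T + 6 + 3 * T) \<and>
    M' (-14) = real (3 * T + 6 + 3 * T + (T + 1)) \<and> M' (-16) = real (3 * T * (3 * (T + 1))) \<and>
    M' (-17) = 1 \<and> M' (-18) = 7 \<and> M' (-19) = real (3 * T + 6) \<and> M' (-23) = 0 \<and>
    (\<forall>a\<ge>0. M' a = M a))"
  using assms by (simp add: ram_exec_simps)

lemma ram_cand_step:
  fixes M :: "int \<Rightarrow> real"
  assumes "M (-1) = real T" "M (-7) = 1" "M (-8) = 0" "M (-9) = 3" "M (-17) = real (Suc s)"
    "M (-18) = real (3 * s + 7)" "M (-19) = real (CB + 3 * s)" "M (-23) = sh" "s < T"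
    "M (int (3 * s + 7)) = dh" "M (int (3 * s + 8)) = dl"
  shows "exec_until adversary_ram [22] 22 M 20 (\<lambda>pc M'. M' (-17) = real (Suc (Suc s)) \<and>
     M' (-18) = real (3 * Suc s + 7) \<and> M' (-19) = real (CB + 3 * Suc s) \<and> M' (-23) = sh + (dh + dl) \<and>
     (\<forall>a\<ge>0. M' a = (M(int (CB + 3 * s) := dh - dl, int (CB + 3 * s) + 1 := dh, int (CB + 3 * s) + 2 := dh + dl)) a) \<and>
     (\<forall>a. a \<notin> {-17, -18, -19, -20, -21, -22, -23} \<and> a < 0 \<longrightarrow> M' a = M a))"
proof -
  have "M \<lfloor>real (3 * s + 7)\<rfloor> = dh" "M \<lfloor>real (3 * s + 7) + 1\<rfloor> = dl"
    using assms(10,11) by (simp_all add: add.commute floor_numeral_mult_of_nat)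
  then show ?thesis using assms by (simp add: ram_exec_simps neg_eq_nonneg_iff)
qed

lemma ram_cand_exit:
  fixes M :: "int \<Rightarrow> real"
  assumes "M (-1) = real T" "M (-8) = 0" "M (-17) = real (Suc T)"
  shows "exec_until adversary_ram [39] 22 M 2 (\<lambda>pc M'. M' = M)"
  using assms by (simp add: ram_exec_simps)

lemma ram_table_init:
  fixes M :: "int \<Rightarrow> real"
  assumes "M (-7) = 1" "M (-8) = 0" "M (-9) = 3" "M (-14) = real BT" "M (-16) = real LS"
    "M 6 = x1" "M 7 = d1" "M 8 = e1"
  shows "exec_until adversary_ram [47] 39 M 30 (\<lambda>pc M'. M' (-24) = 1 \<and> M' (-25) = 0 \<and> M' (-26) = 0 \<and>
     M' (-27) = real (BT + LS) \<and> M' (-28) = real BT \<and> M' (-33) = 6 \<and> M' (-29) = x1 \<and>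
     M' (-32) = d1 \<and> M' (-30) = d1 - e1 \<and> M' (-31) = d1 + e1 \<and>
     (\<forall>a. a \<noteq> -24 \<and> a \<noteq> -25 \<and> a \<noteq> -26 \<and> a \<noteq> -27 \<and> a \<noteq> -28 \<and> a \<noteq> -29 \<and> a \<noteq> -30 \<and> a \<noteq> -31 \<and> a \<noteq> -32 \<and> a \<noteq> -33 \<and> a \<noteq> -44 \<and> a \<noteq> -45 \<longrightarrow> M' a = M a))"
  using assms by (simp add: ram_exec_simps)

lemma ram_cell_check:
  fixes M :: "int \<Rightarrow> real"
  assumes "M (-1) = real T" "M (-7) = 1" "M (-8) = 0" "M (-9) = 3"
    "M (-13) = real CB" "M (-24) = real t" "M (-25) = real v" "M (-26) = real k" "M (-28) = real P"
    "M (-30) = l" "M (-31) = h" "M (-32) = dh" "t \<le> T" "M (int CB + int v) = cv"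
  shows "exec_until adversary_ram [72, 116] 47 M 20 (\<lambda>pc M'.
     (if l \<le> cv \<and> cv \<le> h \<and> (if cv = dh then 0 else 1) \<le> k
      then pc = 72 \<and> M' (-34) = cv \<and> M' (-37) = real P + 3 * (real k - (if cv = dh then 0 else 1)) \<and>
        M' (-38) = 0 \<and> M' (-39) = real CB \<and> M' (-40) = 0 \<and> M' (-41) = 0 \<and> M' (-42) = 0 \<and> M' (-43) = 0
      else pc = 116) \<and>
     (\<forall>a. a \<notin> {-34, -35, -36, -37, -38, -39, -40, -41, -42, -43, -44} \<longrightarrow> M' a = M a))"
  using assms by (simp add: ram_exec_simps)

lemma ram_scan_step:
  fixes M :: "int \<Rightarrow> real"
  assumes "M (-10) = real n" "M (-8) = 0" "M (-7) = 1" "M (-12) = real S" "M (-34) = cv"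
    "M (-38) = real i" "M (-39) = real (CB + i)" "M (-37) = real (P + S * i)"
    "scan_best c bd vl cv i = (M (-40), M (-41), M (-42))" "i < n"
    "M (int CB + int i) = c i" "M (int P + int S * int i) = bd i" "M (int P + int S * int i + 1) = vl i"
  shows "exec_until adversary_ram [72] 72 M 20 (\<lambda>pc M'. M' (-38) = real (Suc i) \<and>
     M' (-39) = real (CB + Suc i) \<and> M' (-37) = real (P + S * Suc i) \<and>
     scan_best c bd vl cv (Suc i) = (M' (-40), M' (-41), M' (-42)) \<and>
     (\<forall>a. a \<notin> {-37, -38, -39, -40, -41, -42, -44, -49, -50, -51} \<longrightarrow> M' a = M a))"
  using assms by (simp add: ram_exec_simps)

lemma ram_scan_exit:
  fixes M :: "int \<Rightarrow> real"
  assumes "M (-10) = real n" "M (-38) = real n"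
  shows "exec_until adversary_ram [90] 72 M 1 (\<lambda>pc M'. M' = M)"
  using assms by (simp add: ram_exec_simps)

lemma ram_cell_costs:
  fixes M :: "int \<Rightarrow> real"
  assumes "M (-1) = real T" "M (-2) = cP" "M (-3) = cI" "M (-4) = cB" "M (-5) = bP"
    "M (-8) = 0" "M (-24) = real t" "M (-29) = X" "M (-34) = cv" "M (-40) = f" "M (-43) = 0" "t \<le> T"
  shows "exec_until adversary_ram [106, 116] 90 M 20 (\<lambda>pc M'.
     (pc = 116 \<longrightarrow> f \<le> 0 \<and> M' = M) \<and>
     (pc = 106 \<longrightarrow> \<not> f \<le> 0 \<and> M' (-46) = fI T cP cI bP t X cv \<and> M' (-47) = fB T cP cB bP t X cv \<and>
        (\<forall>a. a \<noteq> -44 \<and> a \<noteq> -46 \<and> a \<noteq> -47 \<longrightarrow> M' a = M a)))"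
  using assms by (simp add: ram_exec_simps fI_def fB_def)

lemma ram_cell_store:
  fixes M :: "int \<Rightarrow> real"
  assumes "M (-7) = 1" "M (-8) = 0" "M (-27) = real c" "M (-46) = u" "M (-47) = w" "M (-41) = b" "M (-42) = ar"
  shows "exec_until adversary_ram [121] 106 M 20 (\<lambda>pc M'.
     (\<forall>a\<ge>0. M' a = (M(int c := 0, int c + 1 := max u w + b, int c + 2 := ar)) a) \<and>
     (\<forall>a<0. a \<noteq> -44 \<and> a \<noteq> -45 \<and> a \<noteq> -48 \<longrightarrow> M' a = M a))"
  using assms by (simp add: ram_exec_simps neg_eq_nonneg_iff max_def)

lemma ram_store_infeasible:
  fixes M :: "int \<Rightarrow> real"
  assumes "M (-7) = 1" "M (-8) = 0" "M (-27) = real c"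
  shows "exec_until adversary_ram [121] 116 M 10 (\<lambda>pc M'.
     (\<forall>a\<ge>0. M' a = (M(int c := 1, int c + 1 := 0, int c + 2 := 0)) a) \<and>
     (\<forall>a<0. a \<noteq> -45 \<longrightarrow> M' a = M a))"
  using assms by (simp add: ram_exec_simps neg_eq_nonneg_iff)

lemma ram_next_budget:
  fixes M :: "int \<Rightarrow> real"
  assumes "M (-1) = real T" "M (-7) = 1" "M (-9) = 3" "M (-26) = real k" "Suc k \<le> T"
  shows "exec_until adversary_ram [47] 121 M 20 (\<lambda>pc M'. M' (-27) = M (-27) + 3 \<and> M' (-26) = real (Suc k) \<and>
     (\<forall>a. a \<noteq> -26 \<and> a \<noteq> -27 \<longrightarrow> M' a = M a))"
  using assms by (simp add: ram_exec_simps)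

lemma ram_next_cand:
  fixes M :: "int \<Rightarrow> real"
  assumes "M (-1) = real T" "M (-7) = 1" "M (-9) = 3" "M (-10) = real n" "M (-26) = real k" "M (-25) = real v"
    "\<not> Suc k \<le> T" "Suc v < n"
  shows "exec_until adversary_ram [47] 121 M 20 (\<lambda>pc M'. M' (-27) = M (-27) + 3 \<and> M' (-26) = 0 \<and>
     M' (-25) = real (Suc v) \<and> (\<forall>a. a \<noteq> -25 \<and> a \<noteq> -26 \<and> a \<noteq> -27 \<longrightarrow> M' a = M a))"
  using assms by (simp add: ram_exec_simps)

lemma ram_next_period:
  fixes M :: "int \<Rightarrow> real"
  assumes "M (-1) = real T" "M (-7) = 1" "M (-8) = 0" "M (-9) = 3" "M (-10) = real n" "M (-16) = real LS"
    "M (-24) = real t" "M (-25) = real v" "M (-26) = real k" "M (-33) = real (3 * t + 3)"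
    "\<not> Suc k \<le> T" "\<not> Suc v < n"
  shows "exec_until adversary_ram [47] 121 M 20 (\<lambda>pc M'. M' (-27) = M (-27) + 3 \<and> M' (-26) = 0 \<and>
     M' (-25) = 0 \<and> M' (-24) = real (Suc t) \<and> M' (-28) = M (-28) + real LS \<and> M' (-33) = real (3 * Suc t + 3) \<and>
     M' (-29) = M (-29) + M (int (3 * Suc t + 3)) \<and> M' (-32) = M (int (3 * Suc t + 4)) \<and>
     M' (-30) = M (int (3 * Suc t + 4)) - M (int (3 * Suc t + 5)) \<and>
     M' (-31) = M (int (3 * Suc t + 4)) + M (int (3 * Suc t + 5)) \<and>
     (\<forall>a. a \<notin> {-33..-24} \<and> a \<noteq> -44 \<and> a \<noteq> -45 \<longrightarrow> M' a = M a))"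
  using assms by (simp add: ram_exec_simps add.commute)

lemma ram_table_exit:
  fixes M :: "int \<Rightarrow> real"
  assumes "M (-1) = real T" "M (-8) = 0" "M (-24) = real t" "T < t"
  shows "exec_until adversary_ram [141] 47 M 2 (\<lambda>pc M'. M' = M)"
  using assms by (simp add: ram_exec_simps)

lemma ram_final_scan_init:
  fixes M :: "int \<Rightarrow> real"
  assumes "M (-6) = real G" "M (-8) = 0" "M (-9) = 3" "M (-13) = real CB" "M (-23) = h" "M (-28) = real P"
  shows "exec_until adversary_ram [72] 141 M 20 (\<lambda>pc M'. M' (-37) = real (P + 3 * G) \<and> M' (-34) = h \<and>
     M' (-38) = 0 \<and> M' (-39) = real CB \<and> M' (-40) = 0 \<and> M' (-41) = 0 \<and> M' (-42) = 0 \<and> M' (-43) = 1 \<and>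
     (\<forall>a. a \<notin> {-44..-34} \<longrightarrow> M' a = M a))"
  using assms by (simp add: ram_exec_simps)

lemma ram_final_scan_exit:
  fixes M :: "int \<Rightarrow> real"
  assumes "M (-8) = 0" "M (-43) = 1"
  shows "exec_until adversary_ram [151] 90 M 2 (\<lambda>pc M'. M' = M)"
  using assms by (simp add: ram_exec_simps)

lemma ram_backtrack_init:
  fixes M :: "int \<Rightarrow> real"
  shows "exec_until adversary_ram [155] 151 M 10 (\<lambda>pc M'. M' (-24) = M (-1) \<and> M' (-26) = M (-6) \<and>
     M' (-25) = M (-42) \<and> M' (-52) = M (-15) + M (-1) \<and>
     (\<forall>a. a \<noteq> -24 \<and> a \<noteq> -25 \<and> a \<noteq> -26 \<and> a \<noteq> -52 \<longrightarrow> M' a = M a))"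
  by (simp add: ram_exec_simps)

lemma ram_backtrack_step:
  fixes M :: "int \<Rightarrow> real"
  assumes "M (-7) = 1" "M (-8) = 0" "M (-9) = 3" "M (-10) = real n" "M (-11) = real m" "M (-13) = real CB"
    "M (-14) = real BT" "M (-24) = real t" "1 \<le> t" "M (-25) = real v" "M (-26) = real k" "M (-52) = real p"
    "M (int CB + int v) = cv" "M (int (3 * t + 4)) = dh" "M (int BT + 3 * int ((t * n + v) * m + k) + 2) = ar"
  shows "exec_until adversary_ram [155] 155 M 30 (\<lambda>pc M'. M' (-24) = real (t - 1) \<and> M' (-25) = ar \<and>
     M' (-26) = real k - (if cv = dh then 0 else 1) \<and> M' (-52) = real p - 1 \<and>
     (\<forall>a\<ge>0. M' a = (M(int p := cv)) a) \<and>
     (\<forall>a<0. a \<notin> {-26, -25, -24, -32, -34, -35, -44, -45, -52, -53} \<longrightarrow> M' a = M a))"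
proof -
  have "real CB + real v = real (CB + v)" "3 * real t + 4 = real (3 * t + 4)"
    "((real t * real n + real v) * real m + real k) * 3 + real BT + 1 + 1 = real (BT + 3 * ((t * n + v) * m + k) + 2)"
    by simp_all
  then have "M \<lfloor>real CB + real v\<rfloor> = cv" "M \<lfloor>3 * real t + 4\<rfloor> = dh"
    "M \<lfloor>((real t * real n + real v) * real m + real k) * 3 + real BT + 1 + 1\<rfloor> = ar"
    using assms(13-15) by (simp_all only: floor_of_nat) (simp_all add: algebra_simps)
  then show ?thesis using assms by (simp add: ram_exec_simps neg_eq_nonneg_iff of_nat_diff)
qed

lemma ram_backtrack_exit:
  fixes M :: "int \<Rightarrow> real"
  assumes "M (-7) = 1" "M (-8) = 0" "M (-24) = 0"
  shows "exec_until adversary_ram [183] 155 M 2 (\<lambda>pc M'. M' = M)"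
  using assms by (simp add: ram_exec_simps)

lemma ram_output_init:
  fixes M :: "int \<Rightarrow> real"
  assumes "M (-7) = 1"
  shows "exec_until adversary_ram [188] 183 M 10 (\<lambda>pc M'. M' 0 = 1 \<and> M' 1 = M (-1) \<and> M' 2 = M (-15) + 1 \<and>
     M' 4 = 1 \<and> M' 5 = -1 \<and> (\<forall>a. a \<notin> {0, 1, 2, 4, 5} \<longrightarrow> M' a = M a))"
  using assms by (simp add: ram_exec_simps)

lemma ram_output_step:
  fixes M :: "int \<Rightarrow> real"
  assumes "M 0 = real t" "M 1 = real T" "t \<le> T" "1 \<le> t" "M 2 = real p" "M 4 = 1" "M 5 = - real t" "M (int p) = y"
  shows "exec_until adversary_ram [188] 188 M 10 (\<lambda>pc M'. M' 0 = real (Suc t) \<and> M' 2 = real (Suc p) \<and>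
     M' 5 = - real (Suc t) \<and> M' (- int t) = y \<and> (\<forall>a. a \<notin> {0, 2, 3, 5, - int t} \<longrightarrow> M' a = M a))"
  using assms by (simp add: ram_exec_simps)

lemma ram_output_exit:
  fixes M :: "int \<Rightarrow> real"
  assumes "M 0 = real t" "M 1 = real T" "T < t" "M 4 = 1"
  shows "exec_until adversary_ram [196] 188 M 2 (\<lambda>pc M'. M' = M)"
  using assms by (simp add: ram_exec_simps)

lemma ram_halt: "run adversary_ram (Running 196 M) 1 = Halted M"
  by (simp add: run_def adversary_ram_def)


lemma scan_loop:
  fixes M :: "int \<Rightarrow> real"
  assumes regs: "M (-10) = real n" "M (-8) = 0" "M (-7) = 1" "M (-12) = real S" "M (-34) = cv"
    "M (-38) = 0" "M (-39) = real CB" "M (-37) = real P" "M (-40) = 0" "M (-41) = 0" "M (-42) = 0"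
    and reads: "\<And>w. w < n \<Longrightarrow>
      M (int CB + int w) = c w \<and> M (int P + int S * int w) = bd w \<and> M (int P + int S * int w + 1) = vl w"
  shows "reaches_within adversary_ram 72 M (n * 20 + 1) (\<lambda>pc M'. pc = 90 \<and>
    (M' (-40), M' (-41), M' (-42)) = scan_best c bd vl cv n \<and>
    (\<forall>a. a \<notin> {-37, -38, -39, -40, -41, -42, -44, -49, -50, -51} \<longrightarrow> M' a = M a))"
proof -
  define I where "I = (\<lambda>i M'. M' (-38) = real i \<and> M' (-39) = real (CB + i) \<and> M' (-37) = real (P + S * i) \<and>
     scan_best c bd vl cv i = (M' (-40), M' (-41), M' (-42)) \<and>
     (\<forall>a. a \<notin> {-37, -38, -39, -40, -41, -42, -44, -49, -50, -51} \<longrightarrow> M' a = M a))"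
  have "reaches_within adversary_ram 72 M' 20 (\<lambda>pc M''. pc = 72 \<and> I (Suc i) M'')"
    if i: "i < n" and inv: "I i M'" for i M'
  proof -
    have frame: "M' a = M a" if "a \<notin> {-37, -38, -39, -40, -41, -42, -44, -49, -50, -51}" for a
      using inv that unfolding I_def by blast
    have "exec_until adversary_ram [72] 72 M' 20 (\<lambda>pc M''. M'' (-38) = real (Suc i) \<and>
       M'' (-39) = real (CB + Suc i) \<and> M'' (-37) = real (P + S * Suc i) \<and>
       scan_best c bd vl cv (Suc i) = (M'' (-40), M'' (-41), M'' (-42)) \<and>
       (\<forall>a. a \<notin> {-37, -38, -39, -40, -41, -42, -44, -49, -50, -51} \<longrightarrow> M'' a = M' a))"
      by (rule ram_scan_step) (use i inv regs reads[OF i] frame in \<open>simp_all add: I_def nonneg_neq_neg_numeral\<close>)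
    then show ?thesis
      by (rule exec_until_reaches_within) (use frame in \<open>auto simp: I_def algebra_simps simp del: scan_best.simps\<close>)
  qed
  moreover have "reaches_within adversary_ram 72 M' 1 (\<lambda>pc M''. pc = 90 \<and>
      (M'' (-40), M'' (-41), M'' (-42)) = scan_best c bd vl cv n \<and>
      (\<forall>a. a \<notin> {-37, -38, -39, -40, -41, -42, -44, -49, -50, -51} \<longrightarrow> M'' a = M a))" if "I n M'" for M'
    by (rule exec_until_reaches_within[OF ram_scan_exit]) (use that regs in \<open>auto simp: I_def\<close>)
  moreover have "I 0 M" using regs by (simp add: I_def)
  ultimately show ?thesis by (rule reaches_within_loop)
qed

context production_instance
begin

definition mem_in :: "int \<Rightarrow> real" where
  "mem_in = input_mem T cP cI cB bP Gamma x Dhat Delta"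

lemma mem_in_params: "mem_in 0 = real T" "mem_in 1 = cP" "mem_in 2 = cI" "mem_in 3 = cB" "mem_in 4 = bP"
  "mem_in 5 = real Gamma"
  unfolding mem_in_def input_mem_def by auto

lemma mem_in_period:
  assumes "1 \<le> t" "t \<le> T"
  shows "mem_in (int (3 * t + 3)) = x t" "mem_in (int (3 * t + 4)) = Dhat t" "mem_in (int (3 * t + 5)) = Delta t"
proof -
  have "int (3 * t + 3) div 3 - 1 = int t" "int (3 * t + 4) div 3 - 1 = int t" "int (3 * t + 5) div 3 - 1 = int t"
    "int (3 * t + 3) mod 3 = 0" "int (3 * t + 4) mod 3 = 1" "int (3 * t + 5) mod 3 = 2"
    by presburger+
  then show "mem_in (int (3 * t + 3)) = x t" "mem_in (int (3 * t + 4)) = Dhat t" "mem_in (int (3 * t + 5)) = Delta t"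
    unfolding mem_in_def input_mem_def Let_def using assms by auto
qed

lemma mem_in_beyond: "int (3 * T + 5) < a \<Longrightarrow> mem_in a = 0"
  unfolding mem_in_def input_mem_def by auto

definition nbud :: nat where "nbud = T + 1"
definition cand_base :: nat where "cand_base = 3 * T + 6"
definition scen_base :: nat where "scen_base = cand_base + ncand"
definition table_base :: nat where "table_base = scen_base + nbud"

lemma bases_above_input: "int (3 * T + 5) < int cand_base" "int cand_base + int ncand < int table_base"
  by (auto simp: cand_base_def scen_base_def table_base_def nbud_def)

definition consts_loaded :: "(int \<Rightarrow> real) \<Rightarrow> bool" where
  "consts_loaded M \<longleftrightarrow> M (-1) = real T \<and> M (-2) = cP \<and> M (-3) = cI \<and> M (-4) = cB \<and> M (-5) = bP \<and>
     M (-6) = real Gamma \<and> M (-7) = 1 \<and> M (-8) = 0 \<and> M (-9) = 3 \<and> M (-10) = real ncand \<and>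
     M (-11) = real nbud \<and> M (-12) = real (3 * nbud) \<and> M (-13) = real cand_base \<and>
     M (-14) = real table_base \<and> M (-15) = real scen_base \<and> M (-16) = real (ncand * (3 * nbud))"

lemma consts_loaded_cong:
  "consts_loaded M \<Longrightarrow> (\<And>a. -16 \<le> a \<Longrightarrow> a \<le> -1 \<Longrightarrow> M' a = M a) \<Longrightarrow> consts_loaded M'"
  unfolding consts_loaded_def by simp

definition mem_cands :: "nat \<Rightarrow> int \<Rightarrow> real" where
  "mem_cands s a = (if int cand_base \<le> a \<and> a < int cand_base + 3 * int s then cand (nat (a - int cand_base))
                    else mem_in a)"

lemma mem_cands_Suc:
  assumes "s < T" "0 \<le> a"
  shows "((mem_cands s)(int (cand_base + 3 * s) := lo (Suc s), int (cand_base + 3 * s) + 1 := Dhat (Suc s),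
     int (cand_base + 3 * s) + 2 := hi (Suc s))) a = mem_cands (Suc s) a"
proof -
  have "nat (int (cand_base + 3 * s) - int cand_base) = 3 * s"
    "nat (int (cand_base + 3 * s) + 1 - int cand_base) = 3 * s + 1"
    "nat (int (cand_base + 3 * s) + 2 - int cand_base) = 3 * s + 2" by auto
  moreover have "cand (Suc (3 * s)) = Dhat (Suc s)" "cand (Suc (Suc (3 * s))) = hi (Suc s)"
    using cand_triple(2,3)[of s] by simp_all
  ultimately show ?thesis unfolding mem_cands_def by auto
qed

lemma mem_cands_below: "a < int cand_base \<Longrightarrow> mem_cands s a = mem_in a"
  by (simp add: mem_cands_def)

lemma mem_cands_cand: "v < ncand \<Longrightarrow> mem_cands T (int cand_base + int v) = cand v"
  by (simp add: mem_cands_def ncand_def)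

definition cands_inv :: "nat \<Rightarrow> (int \<Rightarrow> real) \<Rightarrow> bool" where
  "cands_inv s M \<longleftrightarrow> consts_loaded M \<and> M (-17) = real (Suc s) \<and> M (-18) = real (3 * s + 7) \<and>
     M (-19) = real (cand_base + 3 * s) \<and> M (-23) = (\<Sum>t=1..s. hi t) \<and> (\<forall>a\<ge>0. M a = mem_cands s a)"

lemma cands_init: "reaches_within adversary_ram 0 mem_in 32 (\<lambda>pc M. pc = 22 \<and> cands_inv 0 M)"
proof (rule exec_until_reaches_within[OF ram_setup[OF mem_in_params]], elim conjE)
  fix pc :: nat and M assume "pc \<in> set [22]" and post: "M (-1) = real T" "M (-2) = cP" "M (-3) = cI" "M (-4) = cB"
    "M (-5) = bP" "M (-6) = real Gamma" "M (-7) = 1" "M (-8) = 0" "M (-9) = 3" "M (-10) = real (3 * T)"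
    "M (-11) = real (T + 1)" "M (-12) = real (3 * (T + 1))" "M (-13) = real (3 * T + 6)"
    "M (-15) = real (3 * T + 6 + 3 * T)" "M (-14) = real (3 * T + 6 + 3 * T + (T + 1))"
    "M (-16) = real (3 * T * (3 * (T + 1)))" "M (-17) = 1" "M (-18) = 7" "M (-19) = real (3 * T + 6)"
    "M (-23) = 0" "\<forall>a\<ge>0. M a = mem_in a"
  have "consts_loaded M"
    unfolding consts_loaded_def cand_base_def scen_base_def table_base_def nbud_def ncand_def
    using post(1-16) by (simp add: algebra_simps)
  then show "pc = 22 \<and> cands_inv 0 M"
    using \<open>pc \<in> set [22]\<close> post(17-21) by (simp add: cands_inv_def mem_cands_def cand_base_def)
qed

lemma cands_step:
  assumes s: "s < T" and inv: "cands_inv s M"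
  shows "reaches_within adversary_ram 22 M 20 (\<lambda>pc M'. pc = 22 \<and> cands_inv (Suc s) M')"
proof -
  have loaded: "consts_loaded M" and mem: "\<forall>a\<ge>0. M a = mem_cands s a"
    using inv unfolding cands_inv_def by blast+
  have "int (3 * Suc s + 4) < int cand_base" "int (3 * Suc s + 5) < int cand_base"
    using s by (auto simp: cand_base_def)
  then have "M (int (3 * Suc s + 4)) = Dhat (Suc s)" "M (int (3 * Suc s + 5)) = Delta (Suc s)"
    using mem mem_in_period[of "Suc s"] s by (simp_all add: mem_cands_below)
  then have "M (int (3 * s + 7)) = Dhat (Suc s)" "M (int (3 * s + 8)) = Delta (Suc s)"
    by (simp_all add: add.commute)
  then have "exec_until adversary_ram [22] 22 M 20 (\<lambda>pc M'. M' (-17) = real (Suc (Suc s)) \<and>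
     M' (-18) = real (3 * Suc s + 7) \<and> M' (-19) = real (cand_base + 3 * Suc s) \<and>
     M' (-23) = (\<Sum>t=1..s. hi t) + (Dhat (Suc s) + Delta (Suc s)) \<and>
     (\<forall>a\<ge>0. M' a = (M(int (cand_base + 3 * s) := Dhat (Suc s) - Delta (Suc s),
        int (cand_base + 3 * s) + 1 := Dhat (Suc s), int (cand_base + 3 * s) + 2 := Dhat (Suc s) + Delta (Suc s))) a) \<and>
     (\<forall>a. a \<notin> {-17, -18, -19, -20, -21, -22, -23} \<and> a < 0 \<longrightarrow> M' a = M a))"
    using loaded inv s unfolding cands_inv_def consts_loaded_def by (intro ram_cand_step) simp_all
  then show ?thesis
  proof (rule exec_until_reaches_within, elim conjE)
    fix pc :: nat and M' assume pc: "pc \<in> set [22]" and post: "M' (-17) = real (Suc (Suc s))"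
      "M' (-18) = real (3 * Suc s + 7)" "M' (-19) = real (cand_base + 3 * Suc s)"
      "M' (-23) = (\<Sum>t=1..s. hi t) + (Dhat (Suc s) + Delta (Suc s))"
      "\<forall>a\<ge>0. M' a = (M(int (cand_base + 3 * s) := Dhat (Suc s) - Delta (Suc s),
        int (cand_base + 3 * s) + 1 := Dhat (Suc s), int (cand_base + 3 * s) + 2 := Dhat (Suc s) + Delta (Suc s))) a"
      "\<forall>a. a \<notin> {-17, -18, -19, -20, -21, -22, -23} \<and> a < 0 \<longrightarrow> M' a = M a"
    have "consts_loaded M'" using post(6) by (intro consts_loaded_cong[OF loaded]) auto
    moreover have "M' a = mem_cands (Suc s) a" if "0 \<le> a" for a
    proof -
      have "M' a = ((mem_cands s)(int (cand_base + 3 * s) := lo (Suc s), int (cand_base + 3 * s) + 1 := Dhat (Suc s),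
          int (cand_base + 3 * s) + 2 := hi (Suc s))) a"
        using post(5) mem that by (simp add: lo_def hi_def)
      then show ?thesis using mem_cands_Suc[OF s that] by simp
    qed
    ultimately show "pc = 22 \<and> cands_inv (Suc s) M'"
      using pc post(1-4) by (simp add: cands_inv_def hi_def)
  qed
qed

lemma cands_phase: "reaches_within adversary_ram 0 mem_in (32 + (T * 20 + 2)) (\<lambda>pc M. pc = 39 \<and> cands_inv T M)"
proof (rule reaches_within_trans[OF cands_init])
  fix pc :: nat and M assume "pc = 22 \<and> cands_inv 0 M"
  moreover have "reaches_within adversary_ram 22 M' 2 (\<lambda>pc M. pc = 39 \<and> cands_inv T M)" if "cands_inv T M'" for M'
    by (rule exec_until_reaches_within[OF ram_cand_exit]) (use that in \<open>auto simp: cands_inv_def consts_loaded_def\<close>)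
  ultimately show "reaches_within adversary_ram pc M (T * 20 + 2) (\<lambda>pc M. pc = 39 \<and> cands_inv T M)"
    using reaches_within_loop[where I = cands_inv, OF cands_step] by blast
qed


definition layer_size :: nat where "layer_size = ncand * nbud"

definition cell_t :: "nat \<Rightarrow> nat" where "cell_t j = j div layer_size"
definition cell_v :: "nat \<Rightarrow> nat" where "cell_v j = j mod layer_size div nbud"
definition cell_k :: "nat \<Rightarrow> nat" where "cell_k j = j mod nbud"

lemma nbud_pos: "0 < nbud"
  by (simp add: nbud_def)

lemma cell_decomp: "j = (cell_t j * ncand + cell_v j) * nbud + cell_k j" "cell_v j < ncand" "cell_k j < nbud"
proof -
  have "j = cell_t j * layer_size + j mod layer_size" unfolding cell_t_def by simp
  moreover have "j mod layer_size = cell_v j * nbud + j mod layer_size mod nbud" unfolding cell_v_def by simp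
  moreover have "j mod layer_size mod nbud = cell_k j" unfolding cell_k_def layer_size_def by (simp add: mod_mod_cancel)
  ultimately show "j = (cell_t j * ncand + cell_v j) * nbud + cell_k j" by (simp add: layer_size_def algebra_simps)
  have "j mod layer_size < ncand * nbud" using ncand_pos nbud_pos by (simp add: layer_size_def)
  then show "cell_v j < ncand" by (simp add: cell_v_def less_mult_imp_div_less)
  show "cell_k j < nbud" using nbud_pos by (simp add: cell_k_def)
qed

lemma cell_of:
  assumes "v < ncand" "k < nbud"
  shows "cell_t ((t * ncand + v) * nbud + k) = t" "cell_v ((t * ncand + v) * nbud + k) = v"
    "cell_k ((t * ncand + v) * nbud + k) = k"
proof -
  have lt: "v * nbud + k < layer_size"
  proof -
    have "v * nbud + k < (v + 1) * nbud" using assms(2) by simp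
    also have "\<dots> \<le> layer_size" using assms(1) unfolding layer_size_def by (intro mult_right_mono) auto
    finally show ?thesis .
  qed
  have e: "(t * ncand + v) * nbud + k = t * layer_size + (v * nbud + k)" by (simp add: layer_size_def algebra_simps)
  show "cell_t ((t * ncand + v) * nbud + k) = t" unfolding cell_t_def e using lt by simp
  show "cell_v ((t * ncand + v) * nbud + k) = v" unfolding cell_v_def e using lt assms(2) by simp
  show "cell_k ((t * ncand + v) * nbud + k) = k" unfolding cell_k_def e using assms(2) lt
    by (simp add: layer_size_def mod_add_left_eq[symmetric])
qed

lemma cell_Suc:
  shows "Suc (cell_k j) \<le> T \<Longrightarrow>
      cell_t (Suc j) = cell_t j \<and> cell_v (Suc j) = cell_v j \<and> cell_k (Suc j) = Suc (cell_k j)"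
    and "\<not> Suc (cell_k j) \<le> T \<Longrightarrow> Suc (cell_v j) < ncand \<Longrightarrow>
      cell_t (Suc j) = cell_t j \<and> cell_v (Suc j) = Suc (cell_v j) \<and> cell_k (Suc j) = 0"
    and "\<not> Suc (cell_k j) \<le> T \<Longrightarrow> \<not> Suc (cell_v j) < ncand \<Longrightarrow>
      cell_t (Suc j) = Suc (cell_t j) \<and> cell_v (Suc j) = 0 \<and> cell_k (Suc j) = 0"
proof -
  note d = cell_decomp[of j]
  show "cell_t (Suc j) = cell_t j \<and> cell_v (Suc j) = cell_v j \<and> cell_k (Suc j) = Suc (cell_k j)"
    if "Suc (cell_k j) \<le> T"
  proof -
    have "Suc j = (cell_t j * ncand + cell_v j) * nbud + Suc (cell_k j)" using d(1) by simp
    moreover have "Suc (cell_k j) < nbud" using that by (simp add: nbud_def)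
    ultimately show ?thesis using cell_of[OF d(2)] by metis
  qed
  show "cell_t (Suc j) = cell_t j \<and> cell_v (Suc j) = Suc (cell_v j) \<and> cell_k (Suc j) = 0"
    if "\<not> Suc (cell_k j) \<le> T" "Suc (cell_v j) < ncand"
  proof -
    have "cell_k j = T" using that d(3) by (simp add: nbud_def)
    then have "Suc j = (cell_t j * ncand + Suc (cell_v j)) * nbud + 0" using d(1) by (simp add: nbud_def)
    then show ?thesis using cell_of[OF that(2) nbud_pos] by metis
  qed
  show "cell_t (Suc j) = Suc (cell_t j) \<and> cell_v (Suc j) = 0 \<and> cell_k (Suc j) = 0"
    if "\<not> Suc (cell_k j) \<le> T" "\<not> Suc (cell_v j) < ncand"
  proof -
    have k: "cell_k j = T" and v: "Suc (cell_v j) = ncand" using that d(2,3) by (simp_all add: nbud_def)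
    have "Suc j = (cell_t j * ncand + cell_v j) * nbud + nbud" using d(1) k by (simp add: nbud_def)
    also have "\<dots> = (cell_t j * ncand + Suc (cell_v j)) * nbud" by (simp add: algebra_simps)
    also have "\<dots> = (Suc (cell_t j) * ncand + 0) * nbud + 0" using v by (simp add: algebra_simps)
    finally show ?thesis using cell_of[OF ncand_pos nbud_pos] by metis
  qed
qed

definition table_word :: "nat \<Rightarrow> real" where
  "table_word m = (case dp (cell_t (m div 3)) (cell_v (m div 3)) (cell_k (m div 3)) of
     (f, b, a) \<Rightarrow> if m mod 3 = 0 then f else if m mod 3 = 1 then b else a)"

definition mem_table :: "nat \<Rightarrow> int \<Rightarrow> real" where
  "mem_table j a = (if int table_base \<le> a \<and> a < int table_base + 3 * int j
                    then table_word (nat (a - int table_base)) else mem_cands T a)"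

lemma mem_table_below: "a < int table_base \<Longrightarrow> mem_table j a = mem_cands T a"
  by (simp add: mem_table_def)

lemma mem_table_cell:
  assumes "j' < j" "dp (cell_t j') (cell_v j') (cell_k j') = (f, b, a)"
  shows "mem_table j (int table_base + 3 * int j') = f" "mem_table j (int table_base + 3 * int j' + 1) = b"
    "mem_table j (int table_base + 3 * int j' + 2) = a"
proof -
  have "nat (int table_base + 3 * int j' - int table_base) = 3 * j'"
    "nat (int table_base + 3 * int j' + 1 - int table_base) = 3 * j' + 1"
    "nat (int table_base + 3 * int j' + 2 - int table_base) = 3 * j' + 2" by auto
  moreover have "(3 * j' + 1) div 3 = j'" "(3 * j' + 1) mod 3 = 1" "(3 * j' + 2) div 3 = j'" "(3 * j' + 2) mod 3 = 2"
    by presburger+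
  ultimately show "mem_table j (int table_base + 3 * int j') = f" "mem_table j (int table_base + 3 * int j' + 1) = b"
    "mem_table j (int table_base + 3 * int j' + 2) = a"
    unfolding mem_table_def table_word_def using assms by auto
qed

lemma mem_table_Suc:
  assumes "0 \<le> a" "dp (cell_t j) (cell_v j) (cell_k j) = (f, b, c)"
  shows "((mem_table j)(int table_base + 3 * int j := f, int table_base + 3 * int j + 1 := b,
     int table_base + 3 * int j + 2 := c)) a = mem_table (Suc j) a"
proof (cases "a \<in> {int table_base + 3 * int j, int table_base + 3 * int j + 1, int table_base + 3 * int j + 2}")
  case True
  then show ?thesis using mem_table_cell[of j "Suc j", OF _ assms(2)] by auto
next
  case False
  then have "(int table_base \<le> a \<and> a < int table_base + 3 * int j) \<longleftrightarrow>
      (int table_base \<le> a \<and> a < int table_base + 3 * int (Suc j))" by auto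
  then show ?thesis using False unfolding mem_table_def by auto
qed

lemma mem_table_first_layer: "0 \<le> a \<Longrightarrow> mem_table layer_size a = mem_cands T a"
proof (cases "int table_base \<le> a \<and> a < int table_base + 3 * int layer_size")
  case True
  then have "nat (a - int table_base) div 3 < layer_size" by linarith
  then have "table_word (nat (a - int table_base)) = 0" by (simp add: table_word_def cell_t_def)
  moreover have "mem_cands T a = 0"
    using True bases_above_input mem_in_beyond by (simp add: mem_cands_def ncand_def)
  ultimately show ?thesis using True by (simp add: mem_table_def)
qed (auto simp: mem_table_def)

text \<open>The cells read by a scan over the layer \<open>t\<close> with budget \<open>k\<close>: the candidates, and the
  feasibility flags and values of the cells \<open>(t, w, k)\<close>, which are \<open>3 (T + 1)\<close> words apart.\<close>

definition scan_base :: "nat \<Rightarrow> nat \<Rightarrow> nat" where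
  "scan_base t k = table_base + t * (ncand * (3 * nbud)) + 3 * k"

lemma mem_table_scan_reads:
  assumes "Suc t * layer_size \<le> j" "k < nbud" "w < ncand"
  shows "mem_table j (int cand_base + int w) = cand w"
    "mem_table j (int (scan_base t k) + int (3 * nbud) * int w) = fst (dp t w k)"
    "mem_table j (int (scan_base t k) + int (3 * nbud) * int w + 1) = fst (snd (dp t w k))"
proof -
  define j' where "j' = (t * ncand + w) * nbud + k"
  have "j' < (t * ncand + w + 1) * nbud" using assms(2) by (simp add: j'_def)
  also have "\<dots> \<le> (Suc t * ncand) * nbud" using assms(3) by (intro mult_right_mono) auto
  also have "\<dots> = Suc t * layer_size" by (simp add: layer_size_def algebra_simps)
  finally have j': "j' < j" using assms(1) by linarith
  have "int (scan_base t k) + int (3 * nbud) * int w = int table_base + 3 * int j'"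
    unfolding scan_base_def j'_def by (simp add: algebra_simps)
  moreover obtain f b a where "dp t w k = (f, b, a)" by (cases "dp t w k")
  ultimately show "mem_table j (int (scan_base t k) + int (3 * nbud) * int w) = fst (dp t w k)"
    "mem_table j (int (scan_base t k) + int (3 * nbud) * int w + 1) = fst (snd (dp t w k))"
    using mem_table_cell[OF j'] cell_of[OF assms(3,2)] by (simp_all add: j'_def)
  show "mem_table j (int cand_base + int w) = cand w"
    using assms(3) bases_above_input(2) mem_table_below mem_cands_cand by simp
qed

definition period_regs :: "nat \<Rightarrow> (int \<Rightarrow> real) \<Rightarrow> bool" where
  "period_regs t M \<longleftrightarrow> M (-28) = real (table_base + (t - 1) * (ncand * (3 * nbud))) \<and> M (-33) = real (3 * t + 3) \<and>
     (t \<le> T \<longrightarrow> M (-29) = cumX x t \<and> M (-30) = lo t \<and> M (-31) = hi t \<and> M (-32) = Dhat t)"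

definition cell_regs :: "nat \<Rightarrow> (int \<Rightarrow> real) \<Rightarrow> bool" where
  "cell_regs j M \<longleftrightarrow> consts_loaded M \<and> M (-23) = (\<Sum>t=1..T. hi t) \<and> M (-24) = real (cell_t j) \<and>
     M (-25) = real (cell_v j) \<and> M (-26) = real (cell_k j) \<and> M (-27) = real (table_base + 3 * j) \<and>
     period_regs (cell_t j) M"

lemma cell_regs_cong: "cell_regs j M \<Longrightarrow> (\<And>a. -33 \<le> a \<Longrightarrow> a \<le> -1 \<Longrightarrow> M' a = M a) \<Longrightarrow> cell_regs j M'"
  unfolding cell_regs_def consts_loaded_def period_regs_def by simp

definition table_inv :: "nat \<Rightarrow> (int \<Rightarrow> real) \<Rightarrow> bool" where
  "table_inv j M \<longleftrightarrow> cell_regs j M \<and> (\<forall>a\<ge>0. M a = mem_table j a)"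

lemma table_init:
  assumes inv: "cands_inv T M"
  shows "reaches_within adversary_ram 39 M 30 (\<lambda>pc M'. pc = 47 \<and> table_inv layer_size M')"
proof -
  have loaded: "consts_loaded M" and mem: "\<forall>a\<ge>0. M a = mem_cands T a" and sum: "M (-23) = (\<Sum>t=1..T. hi t)"
    using inv unfolding cands_inv_def by blast+
  have "M 6 = x 1" "M 7 = Dhat 1" "M 8 = Delta 1"
    using mem mem_in_period[of 1] T_pos bases_above_input(1) mem_cands_below[of _ T] by force+
  then have "exec_until adversary_ram [47] 39 M 30 (\<lambda>pc M'. M' (-24) = 1 \<and> M' (-25) = 0 \<and> M' (-26) = 0 \<and>
     M' (-27) = real (table_base + ncand * (3 * nbud)) \<and> M' (-28) = real table_base \<and> M' (-33) = 6 \<and>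
     M' (-29) = x 1 \<and> M' (-32) = Dhat 1 \<and> M' (-30) = Dhat 1 - Delta 1 \<and> M' (-31) = Dhat 1 + Delta 1 \<and>
     (\<forall>a. a \<noteq> -24 \<and> a \<noteq> -25 \<and> a \<noteq> -26 \<and> a \<noteq> -27 \<and> a \<noteq> -28 \<and> a \<noteq> -29 \<and> a \<noteq> -30 \<and> a \<noteq> -31 \<and>
        a \<noteq> -32 \<and> a \<noteq> -33 \<and> a \<noteq> -44 \<and> a \<noteq> -45 \<longrightarrow> M' a = M a))"
    using loaded unfolding consts_loaded_def by (intro ram_table_init) simp_all
  then show ?thesis
  proof (rule exec_until_reaches_within, elim conjE)
    fix pc :: nat and M' assume pc: "pc \<in> set [47]" and post: "M' (-24) = 1" "M' (-25) = 0" "M' (-26) = 0"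
      "M' (-27) = real (table_base + ncand * (3 * nbud))" "M' (-28) = real table_base" "M' (-33) = 6"
      "M' (-29) = x 1" "M' (-32) = Dhat 1" "M' (-30) = Dhat 1 - Delta 1" "M' (-31) = Dhat 1 + Delta 1"
      "\<forall>a. a \<noteq> -24 \<and> a \<noteq> -25 \<and> a \<noteq> -26 \<and> a \<noteq> -27 \<and> a \<noteq> -28 \<and> a \<noteq> -29 \<and> a \<noteq> -30 \<and> a \<noteq> -31 \<and>
        a \<noteq> -32 \<and> a \<noteq> -33 \<and> a \<noteq> -44 \<and> a \<noteq> -45 \<longrightarrow> M' a = M a"
    have "consts_loaded M'" using post(11) by (intro consts_loaded_cong[OF loaded]) auto
    moreover have "M' (-23) = (\<Sum>t=1..T. hi t)" using post(11) sum by simp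
    moreover have "\<forall>a\<ge>0. M' a = mem_table layer_size a" using post(11) mem mem_table_first_layer by simp
    moreover have "cell_t layer_size = 1" "cell_v layer_size = 0" "cell_k layer_size = 0"
      using cell_of[OF ncand_pos nbud_pos, of 1] by (simp_all add: layer_size_def)
    ultimately show "pc = 47 \<and> table_inv layer_size M'"
      using pc post(1-10) by (simp add: table_inv_def cell_regs_def period_regs_def cumX_def lo_def hi_def layer_size_def)
  qed
qed


definition cell_done :: "nat \<Rightarrow> nat \<Rightarrow> (int \<Rightarrow> real) \<Rightarrow> bool" where
  "cell_done j pc M \<longleftrightarrow> pc = 121 \<and> cell_regs j M \<and> (\<forall>a\<ge>0. M a = mem_table (Suc j) a)"

lemma cell_store_infeasible:
  assumes inv: "table_inv j M" and dp: "dp (cell_t j) (cell_v j) (cell_k j) = (1, 0, 0)"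
    and regs: "\<And>a. -33 \<le> a \<Longrightarrow> a \<le> -1 \<Longrightarrow> M1 a = M a" and mem: "\<forall>a\<ge>0. M1 a = mem_table j a"
  shows "reaches_within adversary_ram 116 M1 10 (cell_done j)"
proof -
  have "M1 (-7) = 1" "M1 (-8) = 0" "M1 (-27) = real (table_base + 3 * j)"
    using inv regs by (simp_all add: table_inv_def cell_regs_def consts_loaded_def)
  from ram_store_infeasible[OF this] show ?thesis
  proof (rule exec_until_reaches_within, elim conjE)
    fix pc :: nat and M' assume pc: "pc \<in> set [121]"
      and post: "\<forall>a\<ge>0. M' a = (M1(int (table_base + 3 * j) := 1, int (table_base + 3 * j) + 1 := 0,
        int (table_base + 3 * j) + 2 := 0)) a" "\<forall>a<0. a \<noteq> -45 \<longrightarrow> M' a = M1 a"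
    have "M' a = mem_table (Suc j) a" if "0 \<le> a" for a
    proof -
      have "M' a = ((mem_table j)(int table_base + 3 * int j := 1, int table_base + 3 * int j + 1 := 0,
          int table_base + 3 * int j + 2 := 0)) a"
        using post(1) mem that by simp
      then show ?thesis using mem_table_Suc[OF that dp] by simp
    qed
    moreover have "cell_regs j M'"
      by (rule cell_regs_cong[of j M]) (use inv post(2) regs in \<open>simp_all add: table_inv_def\<close>)
    ultimately show "cell_done j pc M'" using pc by (simp add: cell_done_def)
  qed
qed

lemma cell_store_value:
  assumes inv: "table_inv j M" and dp: "dp (cell_t j) (cell_v j) (cell_k j) = (0, cost (cell_t j) cv + b, ar)"
    and regs: "\<And>a. -33 \<le> a \<Longrightarrow> a \<le> -1 \<Longrightarrow> M1 a = M a" and mem: "\<forall>a\<ge>0. M1 a = mem_table j a"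
    and val: "M1 (-46) = fI T cP cI bP (cell_t j) (cumX x (cell_t j)) cv"
      "M1 (-47) = fB T cP cB bP (cell_t j) (cumX x (cell_t j)) cv" "M1 (-41) = b" "M1 (-42) = ar"
  shows "reaches_within adversary_ram 106 M1 20 (cell_done j)"
proof -
  let ?c = "int (table_base + 3 * j)"
  have "M1 (-7) = 1" "M1 (-8) = 0" "M1 (-27) = real (table_base + 3 * j)"
    using inv regs by (simp_all add: table_inv_def cell_regs_def consts_loaded_def)
  from ram_cell_store[OF this val] show ?thesis
  proof (rule exec_until_reaches_within, elim conjE)
    fix pc :: nat and M' assume pc: "pc \<in> set [121]"
      and post: "\<forall>a\<ge>0. M' a = (M1(?c := 0, ?c + 1 := max (fI T cP cI bP (cell_t j) (cumX x (cell_t j)) cv)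
          (fB T cP cB bP (cell_t j) (cumX x (cell_t j)) cv) + b, ?c + 2 := ar)) a"
        "\<forall>a<0. a \<noteq> -44 \<and> a \<noteq> -45 \<and> a \<noteq> -48 \<longrightarrow> M' a = M1 a"
    have "M' a = mem_table (Suc j) a" if "0 \<le> a" for a
    proof -
      have "M' a = ((mem_table j)(int table_base + 3 * int j := 0,
          int table_base + 3 * int j + 1 := cost (cell_t j) cv + b, int table_base + 3 * int j + 2 := ar)) a"
        using post(1) mem that by (simp add: cost_def)
      then show ?thesis using mem_table_Suc[OF that dp] by simp
    qed
    moreover have "cell_regs j M'"
      by (rule cell_regs_cong[of j M]) (use inv post(2) regs in \<open>simp_all add: table_inv_def\<close>)
    ultimately show "cell_done j pc M'" using pc by (simp add: cell_done_def)
  qed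
qed

lemma cell_store_scan_result:
  assumes inv: "table_inv j M" and t: "cell_t j \<le> T"
    and regs: "\<And>a. -33 \<le> a \<Longrightarrow> a \<le> -1 \<Longrightarrow> M1 a = M a" and mem: "\<forall>a\<ge>0. M1 a = mem_table j a"
    and scan: "M1 (-34) = cand (cell_v j)" "M1 (-40) = f" "M1 (-41) = b" "M1 (-42) = ar" "M1 (-43) = 0"
    and dp: "dp (cell_t j) (cell_v j) (cell_k j) =
      (if f \<le> 0 then (1, 0, 0) else (0, cost (cell_t j) (cand (cell_v j)) + b, ar))"
  shows "reaches_within adversary_ram 90 M1 (20 + 20) (cell_done j)"
proof -
  have "M1 (-1) = real T" "M1 (-2) = cP" "M1 (-3) = cI" "M1 (-4) = cB" "M1 (-5) = bP" "M1 (-8) = 0"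
    "M1 (-24) = real (cell_t j)" "M1 (-29) = cumX x (cell_t j)"
    using inv regs t by (simp_all add: table_inv_def cell_regs_def consts_loaded_def period_regs_def)
  from ram_cell_costs[OF this scan(1,2,5) t] show ?thesis
  proof (rule exec_until_then, elim conjE)
    fix pc :: nat and M2 assume "pc \<in> set [106, 116]" and infeasible: "pc = 116 \<longrightarrow> f \<le> 0 \<and> M2 = M1"
      and costs: "pc = 106 \<longrightarrow> \<not> f \<le> 0 \<and> M2 (-46) = fI T cP cI bP (cell_t j) (cumX x (cell_t j)) (cand (cell_v j)) \<and>
        M2 (-47) = fB T cP cB bP (cell_t j) (cumX x (cell_t j)) (cand (cell_v j)) \<and>
        (\<forall>a. a \<noteq> -44 \<and> a \<noteq> -46 \<and> a \<noteq> -47 \<longrightarrow> M2 a = M1 a)"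
    show "reaches_within adversary_ram pc M2 20 (cell_done j)"
    proof (cases "pc = 116")
      case True
      then show ?thesis using infeasible cell_store_infeasible[OF inv _ regs mem] dp
        by (auto intro: reaches_within_mono)
    next
      case False
      then have "pc = 106" using \<open>pc \<in> set [106, 116]\<close> by simp
      then show ?thesis using costs dp regs mem scan
        by (auto intro!: cell_store_value[OF inv, where ?M1.0 = M2])
    qed
  qed
qed

lemma cell_scan_store:
  assumes inv: "table_inv j M" and t: "1 \<le> cell_t j" "cell_t j \<le> T"
    and ok: "lo (cell_t j) \<le> cand (cell_v j) \<and> cand (cell_v j) \<le> hi (cell_t j) \<and> dev (cell_t j) (cell_v j) \<le> cell_k j"
    and regs: "\<And>a. -33 \<le> a \<Longrightarrow> a \<le> -1 \<Longrightarrow> M1 a = M a" and mem: "\<forall>a\<ge>0. M1 a = mem_table j a"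
    and start: "M1 (-34) = cand (cell_v j)" "M1 (-37) = real (scan_base (cell_t j - 1) (cell_k j - dev (cell_t j) (cell_v j)))"
      "M1 (-38) = 0" "M1 (-39) = real cand_base" "M1 (-40) = 0" "M1 (-41) = 0" "M1 (-42) = 0" "M1 (-43) = 0"
  shows "reaches_within adversary_ram 72 M1 (ncand * 20 + 1 + (20 + 20)) (cell_done j)"
proof -
  define t v k' where "t = cell_t j" and "v = cell_v j" and "k' = cell_k j - dev (cell_t j) (cell_v j)"
  have "M1 (-10) = real ncand" "M1 (-8) = 0" "M1 (-7) = 1" "M1 (-12) = real (3 * nbud)"
    using inv regs by (simp_all add: table_inv_def cell_regs_def consts_loaded_def)
  moreover have "M1 (int cand_base + int w) = cand w \<and>
      M1 (int (scan_base (t - 1) k') + int (3 * nbud) * int w) = fst (dp (t - 1) w k') \<and>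
      M1 (int (scan_base (t - 1) k') + int (3 * nbud) * int w + 1) = fst (snd (dp (t - 1) w k'))" if "w < ncand" for w
  proof -
    have "Suc (t - 1) * layer_size \<le> j" using t(1) cell_decomp(1)[of j]
      by (simp add: t_def layer_size_def algebra_simps)
    moreover have "k' < nbud" using cell_decomp(3)[of j] by (simp add: k'_def)
    ultimately show ?thesis using mem mem_table_scan_reads[OF _ _ that, of "t - 1" j k'] by simp
  qed
  ultimately have "reaches_within adversary_ram 72 M1 (ncand * 20 + 1) (\<lambda>pc M2. pc = 90 \<and>
      (M2 (-40), M2 (-41), M2 (-42)) = scan_best cand (\<lambda>w. fst (dp (t - 1) w k')) (\<lambda>w. fst (snd (dp (t - 1) w k')))
        (cand v) ncand \<and>
      (\<forall>a. a \<notin> {-37, -38, -39, -40, -41, -42, -44, -49, -50, -51} \<longrightarrow> M2 a = M1 a))"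
    using start unfolding t_def v_def k'_def
    by (intro scan_loop[where S = "3 * nbud" and CB = cand_base and P = "scan_base (t - 1) k'"]) (simp_all add: t_def k'_def)
  then show ?thesis
  proof (rule reaches_within_trans, elim conjE)
    fix pc :: nat and M2 assume "pc = 90" and res: "(M2 (-40), M2 (-41), M2 (-42)) =
        scan_best cand (\<lambda>w. fst (dp (t - 1) w k')) (\<lambda>w. fst (snd (dp (t - 1) w k'))) (cand v) ncand"
      and frame: "\<forall>a. a \<notin> {-37, -38, -39, -40, -41, -42, -44, -49, -50, -51} \<longrightarrow> M2 a = M1 a"
    have "dp (cell_t j) (cell_v j) (cell_k j) = (if M2 (-40) \<le> 0 then (1, 0, 0)
        else (0, cost (cell_t j) (cand (cell_v j)) + M2 (-41), M2 (-42)))"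
      using dp_pos[OF t(1)] ok res[symmetric] by (simp add: t_def v_def k'_def)
    with frame show "reaches_within adversary_ram pc M2 (20 + 20) (cell_done j)" unfolding \<open>pc = 90\<close>
      by (intro cell_store_scan_result[OF inv t(2)]) (use regs mem start in simp_all)
  qed
qed

lemma cell_fill:
  assumes inv: "table_inv j M" and t: "1 \<le> cell_t j" "cell_t j \<le> T"
  shows "reaches_within adversary_ram 47 M (20 + (ncand * 20 + 1 + (20 + 20))) (cell_done j)"
proof -
  define t v k where "t = cell_t j" and "v = cell_v j" and "k = cell_k j"
  have loaded: "consts_loaded M" and mem: "\<forall>a\<ge>0. M a = mem_table j a"
    and r: "M (-24) = real t" "M (-25) = real v" "M (-26) = real k" "period_regs t M"
    using inv unfolding table_inv_def cell_regs_def t_def v_def k_def by blast+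
  have pre: "M (-1) = real T" "M (-7) = 1" "M (-8) = 0" "M (-9) = 3" "M (-13) = real cand_base"
    "M (-28) = real (table_base + (t - 1) * (ncand * (3 * nbud)))" "M (-30) = lo t" "M (-31) = hi t" "M (-32) = Dhat t"
    using loaded r(4) t(2) unfolding consts_loaded_def period_regs_def t_def by simp_all
  have "M (int cand_base + int v) = cand v"
    using mem cell_decomp(2)[of j] bases_above_input(2) mem_table_below mem_cands_cand by (simp add: v_def)
  from ram_cell_check[OF pre(1-5) r(1-3) pre(6-9) t(2)[folded t_def] this] show ?thesis
  proof (rule exec_until_then, elim conjE)
    fix pc :: nat and M1 assume check: "if lo t \<le> cand v \<and> cand v \<le> hi t \<and> (if cand v = Dhat t then 0 else 1) \<le> k
        then pc = 72 \<and> M1 (-34) = cand v \<and>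
          M1 (-37) = real (table_base + (t - 1) * (ncand * (3 * nbud))) + 3 * (real k - (if cand v = Dhat t then 0 else 1)) \<and>
          M1 (-38) = 0 \<and> M1 (-39) = real cand_base \<and> M1 (-40) = 0 \<and> M1 (-41) = 0 \<and> M1 (-42) = 0 \<and> M1 (-43) = 0
        else pc = 116"
      and frame: "\<forall>a. a \<notin> {-34, -35, -36, -37, -38, -39, -40, -41, -42, -43, -44} \<longrightarrow> M1 a = M a"
    have regs: "M1 a = M a" if "-33 \<le> a" "a \<le> -1" for a using frame that by simp
    have mem1: "\<forall>a\<ge>0. M1 a = mem_table j a" using frame mem by simp
    show "reaches_within adversary_ram pc M1 (ncand * 20 + 1 + (20 + 20)) (cell_done j)"
    proof (cases "lo t \<le> cand v \<and> cand v \<le> hi t \<and> dev t v \<le> k")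
      case False
      then have "pc = 116" "dp t v k = (1, 0, 0)" using check dp_pos[OF t(1)] by (auto simp: t_def dev_def)
      then show ?thesis using cell_store_infeasible[OF inv _ regs mem1]
        by (auto simp: t_def v_def k_def intro: reaches_within_mono)
    next
      case True
      then have "pc = 72" and start: "M1 (-34) = cand v"
        "M1 (-37) = real (scan_base (t - 1) (k - dev t v))" "M1 (-38) = 0" "M1 (-39) = real cand_base"
        "M1 (-40) = 0" "M1 (-41) = 0" "M1 (-42) = 0" "M1 (-43) = 0"
        using check by (auto simp: dev_def scan_base_def of_nat_diff split: if_splits)
      then show ?thesis using cell_scan_store[OF inv t _ regs mem1] True by (simp add: t_def v_def k_def)
    qed
  qed
qed


lemma period_regs_cong: "period_regs t M \<Longrightarrow> (\<And>a. -33 \<le> a \<Longrightarrow> a \<le> -28 \<Longrightarrow> M' a = M a) \<Longrightarrow> period_regs t M'"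
  unfolding period_regs_def by simp

lemma period_regs_next:
  assumes t: "1 \<le> t" and regs: "period_regs t M" and mem: "\<forall>a\<ge>0. M a = mem_table j a"
    and next_regs: "M' (-28) = M (-28) + real (ncand * (3 * nbud))" "M' (-33) = real (3 * Suc t + 3)"
      "M' (-29) = M (-29) + M (int (3 * Suc t + 3))" "M' (-32) = M (int (3 * Suc t + 4))"
      "M' (-30) = M (int (3 * Suc t + 4)) - M (int (3 * Suc t + 5))"
      "M' (-31) = M (int (3 * Suc t + 4)) + M (int (3 * Suc t + 5))"
  shows "period_regs (Suc t) M'"
proof -
  have "M' (-28) = real (table_base + t * (ncand * (3 * nbud)))"
    using regs next_regs(1) t by (cases t) (simp_all add: period_regs_def algebra_simps)
  moreover have "M' (-29) = cumX x (Suc t) \<and> M' (-30) = lo (Suc t) \<and> M' (-31) = hi (Suc t) \<and>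
      M' (-32) = Dhat (Suc t)" if "Suc t \<le> T"
  proof -
    have "int (3 * Suc t + 5) < int cand_base" "int cand_base < int table_base"
      using that by (simp_all add: table_base_def scen_base_def cand_base_def nbud_def)
    then have "M (int (3 * Suc t + 3)) = x (Suc t)" "M (int (3 * Suc t + 4)) = Dhat (Suc t)"
      "M (int (3 * Suc t + 5)) = Delta (Suc t)"
      using mem mem_table_below mem_cands_below mem_in_period[of "Suc t"] that by simp_all
    then show ?thesis using regs next_regs that by (simp add: period_regs_def cumX_def lo_def hi_def)
  qed
  ultimately show ?thesis using next_regs(2) by (simp add: period_regs_def)
qed

lemma next_budget:
  assumes regs: "cell_regs j M" and mem: "\<forall>a\<ge>0. M a = mem_table (Suc j) a" and k: "Suc (cell_k j) \<le> T"
  shows "reaches_within adversary_ram 121 M 20 (\<lambda>pc M'. pc = 47 \<and> table_inv (Suc j) M')"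
proof -
  have "M (-1) = real T" "M (-7) = 1" "M (-9) = 3" "M (-26) = real (cell_k j)"
    using regs by (simp_all add: cell_regs_def consts_loaded_def)
  from ram_next_budget[OF this k] show ?thesis
  proof (rule exec_until_reaches_within, elim conjE)
    fix pc :: nat and M' assume "pc \<in> set [47]" "M' (-27) = M (-27) + 3" "M' (-26) = real (Suc (cell_k j))"
      "\<forall>a. a \<noteq> -26 \<and> a \<noteq> -27 \<longrightarrow> M' a = M a"
    then show "pc = 47 \<and> table_inv (Suc j) M'" using regs mem cell_Suc(1)[OF k]
      by (simp add: table_inv_def cell_regs_def consts_loaded_def period_regs_def)
  qed
qed

lemma next_cand:
  assumes regs: "cell_regs j M" and mem: "\<forall>a\<ge>0. M a = mem_table (Suc j) a"
    and v: "\<not> Suc (cell_k j) \<le> T" "Suc (cell_v j) < ncand"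
  shows "reaches_within adversary_ram 121 M 20 (\<lambda>pc M'. pc = 47 \<and> table_inv (Suc j) M')"
proof -
  have "M (-1) = real T" "M (-7) = 1" "M (-9) = 3" "M (-10) = real ncand" "M (-26) = real (cell_k j)"
    "M (-25) = real (cell_v j)" using regs by (simp_all add: cell_regs_def consts_loaded_def)
  from ram_next_cand[OF this v] show ?thesis
  proof (rule exec_until_reaches_within, elim conjE)
    fix pc :: nat and M' assume "pc \<in> set [47]" "M' (-27) = M (-27) + 3" "M' (-26) = 0"
      "M' (-25) = real (Suc (cell_v j))" "\<forall>a. a \<noteq> -25 \<and> a \<noteq> -26 \<and> a \<noteq> -27 \<longrightarrow> M' a = M a"
    then show "pc = 47 \<and> table_inv (Suc j) M'" using regs mem cell_Suc(2)[OF v]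
      by (simp add: table_inv_def cell_regs_def consts_loaded_def period_regs_def)
  qed
qed

lemma next_period:
  assumes t: "1 \<le> cell_t j" and regs: "cell_regs j M" and mem: "\<forall>a\<ge>0. M a = mem_table (Suc j) a"
    and v: "\<not> Suc (cell_k j) \<le> T" "\<not> Suc (cell_v j) < ncand"
  shows "reaches_within adversary_ram 121 M 20 (\<lambda>pc M'. pc = 47 \<and> table_inv (Suc j) M')"
proof -
  have loaded: "consts_loaded M" and period: "period_regs (cell_t j) M" using regs by (simp_all add: cell_regs_def)
  have "M (-1) = real T" "M (-7) = 1" "M (-8) = 0" "M (-9) = 3" "M (-10) = real ncand"
    "M (-16) = real (ncand * (3 * nbud))" "M (-24) = real (cell_t j)" "M (-25) = real (cell_v j)"
    "M (-26) = real (cell_k j)" "M (-33) = real (3 * cell_t j + 3)"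
    using regs by (simp_all add: cell_regs_def consts_loaded_def period_regs_def)
  from ram_next_period[OF this v] show ?thesis
  proof (rule exec_until_reaches_within, elim conjE)
    fix pc :: nat and M' assume "pc \<in> set [47]" and post: "M' (-27) = M (-27) + 3" "M' (-26) = 0" "M' (-25) = 0"
      "M' (-24) = real (Suc (cell_t j))" "M' (-28) = M (-28) + real (ncand * (3 * nbud))"
      "M' (-33) = real (3 * Suc (cell_t j) + 3)" "M' (-29) = M (-29) + M (int (3 * Suc (cell_t j) + 3))"
      "M' (-32) = M (int (3 * Suc (cell_t j) + 4))"
      "M' (-30) = M (int (3 * Suc (cell_t j) + 4)) - M (int (3 * Suc (cell_t j) + 5))"
      "M' (-31) = M (int (3 * Suc (cell_t j) + 4)) + M (int (3 * Suc (cell_t j) + 5))"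
      and frame: "\<forall>a. a \<notin> {-33..-24} \<and> a \<noteq> -44 \<and> a \<noteq> -45 \<longrightarrow> M' a = M a"
    have "period_regs (Suc (cell_t j)) M'" by (rule period_regs_next[OF t period mem post(5-10)])
    moreover have "consts_loaded M'" using frame by (intro consts_loaded_cong[OF loaded]) simp
    ultimately show "pc = 47 \<and> table_inv (Suc j) M'"
      using \<open>pc \<in> set [47]\<close> cell_Suc(3)[OF v] post(1-4) frame mem regs by (simp add: table_inv_def cell_regs_def)
  qed
qed

lemma cell_advance:
  assumes "1 \<le> cell_t j" "cell_done j 121 M"
  shows "reaches_within adversary_ram 121 M 20 (\<lambda>pc M'. pc = 47 \<and> table_inv (Suc j) M')"
proof -
  have "cell_regs j M" "\<forall>a\<ge>0. M a = mem_table (Suc j) a" using assms(2) by (simp_all add: cell_done_def)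
  then show ?thesis using next_budget next_cand next_period[OF assms(1)] by blast
qed


lemma cell_t_range:
  assumes "layer_size \<le> j" "j < Suc T * layer_size"
  shows "1 \<le> cell_t j \<and> cell_t j \<le> T"
proof -
  have "layer_size div layer_size \<le> j div layer_size" using assms(1) by (rule div_le_mono)
  moreover have "j div layer_size < Suc T" using assms(2) by (rule less_mult_imp_div_less)
  ultimately show ?thesis using ncand_pos nbud_pos by (simp add: cell_t_def layer_size_def)
qed

lemma cell_t_end: "cell_t (Suc T * layer_size) = Suc T"
proof -
  have "Suc T * layer_size = (Suc T * ncand + 0) * nbud + 0" by (simp add: layer_size_def algebra_simps)
  then show ?thesis using cell_of(1)[OF ncand_pos nbud_pos, of "Suc T"] by metis
qed

lemma table_phase:
  assumes "cands_inv T M"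
  shows "reaches_within adversary_ram 39 M (30 + (T * layer_size * ((20 + (ncand * 20 + 1 + (20 + 20))) + 20) + 2))
    (\<lambda>pc M'. pc = 141 \<and> table_inv (Suc T * layer_size) M')"
proof (rule reaches_within_trans[OF table_init[OF assms]])
  fix pc :: nat and M1 assume "pc = 47 \<and> table_inv layer_size M1"
  then have start: "pc = 47" "table_inv (layer_size + 0) M1" by simp_all
  have body: "reaches_within adversary_ram 47 M' ((20 + (ncand * 20 + 1 + (20 + 20))) + 20)
      (\<lambda>pc M''. pc = 47 \<and> table_inv (layer_size + Suc i) M'')"
    if "i < T * layer_size" "table_inv (layer_size + i) M'" for i M'
  proof -
    have t: "1 \<le> cell_t (layer_size + i)" "cell_t (layer_size + i) \<le> T"
      using cell_t_range[of "layer_size + i"] that(1) by simp_all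
    show ?thesis
    proof (rule reaches_within_trans[OF cell_fill[OF that(2) t]])
      fix pc :: nat and M'' assume "cell_done (layer_size + i) pc M''"
      moreover from this have "pc = 121" by (simp add: cell_done_def)
      ultimately show "reaches_within adversary_ram pc M'' 20 (\<lambda>pc M''. pc = 47 \<and> table_inv (layer_size + Suc i) M'')"
        using cell_advance[OF t(1)] by simp
    qed
  qed
  have exit: "reaches_within adversary_ram 47 M' 2 (\<lambda>pc M''. pc = 141 \<and> table_inv (Suc T * layer_size) M'')"
    if "table_inv (layer_size + T * layer_size) M'" for M'
  proof -
    have "consts_loaded M'" "M' (-24) = real (cell_t (Suc T * layer_size))"
      using that unfolding table_inv_def cell_regs_def by (simp_all only: mult_Suc)
    then have "M' (-1) = real T" "M' (-8) = 0" "M' (-24) = real (Suc T)"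
      unfolding cell_t_end by (simp_all add: consts_loaded_def)
    from ram_table_exit[OF this lessI] show ?thesis
      by (rule exec_until_reaches_within) (use that in \<open>auto simp only: mult_Suc set_simps insert_iff empty_iff\<close>)
  qed
  show "reaches_within adversary_ram pc M1 (T * layer_size * ((20 + (ncand * 20 + 1 + (20 + 20))) + 20) + 2)
      (\<lambda>pc M'. pc = 141 \<and> table_inv (Suc T * layer_size) M')"
    unfolding start(1) by (rule reaches_within_loop[where I = "\<lambda>i. table_inv (layer_size + i)", OF body exit start(2)])
qed


definition scan_finished :: "(int \<Rightarrow> real) \<Rightarrow> bool" where
  "scan_finished M \<longleftrightarrow> consts_loaded M \<and> (\<forall>a\<ge>0. M a = mem_table (Suc T * layer_size) a) \<and>
     (\<exists>ws. optimal_last ws \<and> M (-42) = real ws)"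

lemma final_scan:
  assumes loaded: "consts_loaded M" and mem: "\<forall>a\<ge>0. M a = mem_table (Suc T * layer_size) a"
    and start: "M (-37) = real (scan_base T Gamma)" "M (-34) = (\<Sum>t=1..T. hi t)" "M (-38) = 0"
      "M (-39) = real cand_base" "M (-40) = 0" "M (-41) = 0" "M (-42) = 0" "M (-43) = 1"
  shows "reaches_within adversary_ram 72 M (ncand * 20 + 1 + 2) (\<lambda>pc M'. pc = 151 \<and> scan_finished M')"
proof -
  let ?bd = "\<lambda>w. fst (dp T w Gamma)" and ?vl = "\<lambda>w. fst (snd (dp T w Gamma))" and ?h = "\<Sum>t=1..T. hi t"
  have "M (-10) = real ncand" "M (-8) = 0" "M (-7) = 1" "M (-12) = real (3 * nbud)"
    using loaded by (simp_all add: consts_loaded_def)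
  moreover have "M (int cand_base + int w) = cand w \<and> M (int (scan_base T Gamma) + int (3 * nbud) * int w) = ?bd w \<and>
      M (int (scan_base T Gamma) + int (3 * nbud) * int w + 1) = ?vl w" if "w < ncand" for w
  proof -
    have "0 \<le> int (scan_base T Gamma) + int (3 * nbud) * int w" "0 \<le> int cand_base + int w" by simp_all
    then show ?thesis
      using mem mem_table_scan_reads[OF _ _ that, of T "Suc T * layer_size" Gamma] Gamma_le by (simp add: nbud_def)
  qed
  ultimately have "reaches_within adversary_ram 72 M (ncand * 20 + 1) (\<lambda>pc M'. pc = 90 \<and>
      (M' (-40), M' (-41), M' (-42)) = scan_best cand ?bd ?vl ?h ncand \<and>
      (\<forall>a. a \<notin> {-37, -38, -39, -40, -41, -42, -44, -49, -50, -51} \<longrightarrow> M' a = M a))"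
    using start by (intro scan_loop[where S = "3 * nbud" and P = "scan_base T Gamma" and CB = cand_base]) simp_all
  then show ?thesis
  proof (rule reaches_within_trans, elim conjE)
    fix pc :: nat and M' assume "pc = 90" and res: "(M' (-40), M' (-41), M' (-42)) = scan_best cand ?bd ?vl ?h ncand"
      and frame: "\<forall>a. a \<notin> {-37, -38, -39, -40, -41, -42, -44, -49, -50, -51} \<longrightarrow> M' a = M a"
    obtain ws where ws: "optimal_last ws" "M' (-42) = real ws" using scan_best_optimal_last[OF res[symmetric]] .
    have "consts_loaded M'" using frame by (intro consts_loaded_cong[OF loaded]) simp
    then have "scan_finished M'" using frame mem ws by (auto simp: scan_finished_def)
    moreover have "M' (-8) = 0" "M' (-43) = 1" using frame loaded start(8) by (simp_all add: consts_loaded_def)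
    note exit = ram_final_scan_exit[OF this]
    ultimately show "reaches_within adversary_ram pc M' 2 (\<lambda>pc M'. pc = 151 \<and> scan_finished M')"
      unfolding \<open>pc = 90\<close> by (intro exec_until_reaches_within[OF exit]) simp
  qed
qed

lemma final_scan_phase:
  assumes inv: "table_inv (Suc T * layer_size) M"
  shows "reaches_within adversary_ram 141 M (20 + (ncand * 20 + 1 + 2)) (\<lambda>pc M'. pc = 151 \<and> scan_finished M')"
proof -
  have loaded: "consts_loaded M" and mem: "\<forall>a\<ge>0. M a = mem_table (Suc T * layer_size) a"
    and r: "M (-23) = (\<Sum>t=1..T. hi t)" "M (-28) = real (table_base + T * (ncand * (3 * nbud)))"
    using inv cell_t_end unfolding table_inv_def cell_regs_def period_regs_def by simp_all
  have "M (-6) = real Gamma" "M (-8) = 0" "M (-9) = 3" "M (-13) = real cand_base"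
    using loaded by (simp_all add: consts_loaded_def)
  from ram_final_scan_init[OF this r] show ?thesis
  proof (rule exec_until_then, elim conjE)
    fix pc :: nat and M1 assume "pc \<in> set [72]"
      and start: "M1 (-37) = real (table_base + T * (ncand * (3 * nbud)) + 3 * Gamma)" "M1 (-34) = (\<Sum>t=1..T. hi t)"
        "M1 (-38) = 0" "M1 (-39) = real cand_base" "M1 (-40) = 0" "M1 (-41) = 0" "M1 (-42) = 0" "M1 (-43) = 1"
      and frame: "\<forall>a. a \<notin> {-44..-34} \<longrightarrow> M1 a = M a"
    have "consts_loaded M1" using frame by (intro consts_loaded_cong[OF loaded]) simp
    moreover have "\<forall>a\<ge>0. M1 a = mem_table (Suc T * layer_size) a" using frame mem by simp
    moreover have "M1 (-37) = real (scan_base T Gamma)" using start(1) by (simp add: scan_base_def)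
    ultimately show "reaches_within adversary_ram pc M1 (ncand * 20 + 1 + 2) (\<lambda>pc M'. pc = 151 \<and> scan_finished M')"
      using \<open>pc \<in> set [72]\<close> final_scan start(2-8) by simp
  qed
qed

definition mem_scen :: "nat \<Rightarrow> nat \<Rightarrow> int \<Rightarrow> real" where
  "mem_scen ws i a = (if int scen_base + int (T - i) < a \<and> a \<le> int scen_base + int T
     then cand (backtrack T ws Gamma (nat (a - int scen_base))) else mem_table (Suc T * layer_size) a)"

lemma mem_scen_below: "a \<le> int scen_base \<Longrightarrow> mem_scen ws i a = mem_table (Suc T * layer_size) a"
  by (simp add: mem_scen_def)

lemma mem_scen_Suc:
  assumes "i < T"
  shows "(mem_scen ws i)(int (scen_base + (T - i)) := cand (backtrack T ws Gamma (T - i))) = mem_scen ws (Suc i)"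
proof
  fix a
  have "nat (int (scen_base + (T - i)) - int scen_base) = T - i" by simp
  moreover have "(int scen_base + int (T - Suc i) < a) \<longleftrightarrow> (int scen_base + int (T - i) < a \<or> a = int (scen_base + (T - i)))"
    using assms by auto
  ultimately show "((mem_scen ws i)(int (scen_base + (T - i)) := cand (backtrack T ws Gamma (T - i)))) a = mem_scen ws (Suc i) a"
    using assms unfolding mem_scen_def by auto
qed

definition backtrack_inv :: "nat \<Rightarrow> nat \<Rightarrow> (int \<Rightarrow> real) \<Rightarrow> bool" where
  "backtrack_inv ws i M \<longleftrightarrow> consts_loaded M \<and> M (-24) = real (T - i) \<and> M (-52) = real (scen_base + (T - i)) \<and>
     (\<exists>v k. M (-25) = real v \<and> M (-26) = real k \<and> v < ncand \<and> k \<le> T \<and> (1 \<le> T - i \<longrightarrow> fst (dp (T - i) v k) \<le> 0) \<and>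
        (\<forall>t. 1 \<le> t \<and> t \<le> T - i \<longrightarrow> backtrack T ws Gamma t = backtrack (T - i) v k t)) \<and>
     (\<forall>a\<ge>0. M a = mem_scen ws i a)"

lemma backtrack_init:
  assumes ws: "optimal_last ws" and loaded: "consts_loaded M"
    and mem: "\<forall>a\<ge>0. M a = mem_table (Suc T * layer_size) a" and last: "M (-42) = real ws"
  shows "reaches_within adversary_ram 151 M 10 (\<lambda>pc M'. pc = 155 \<and> backtrack_inv ws 0 M')"
proof (rule exec_until_reaches_within[OF ram_backtrack_init], elim conjE)
  fix pc :: nat and M' assume "pc \<in> set [155]" and post: "M' (-24) = M (-1)" "M' (-26) = M (-6)" "M' (-25) = M (-42)"
    "M' (-52) = M (-15) + M (-1)" and frame: "\<forall>a. a \<noteq> -24 \<and> a \<noteq> -25 \<and> a \<noteq> -26 \<and> a \<noteq> -52 \<longrightarrow> M' a = M a"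
  have "consts_loaded M'" using frame by (intro consts_loaded_cong[OF loaded]) simp
  moreover have "\<exists>v k. M' (-25) = real v \<and> M' (-26) = real k \<and> v < ncand \<and> k \<le> T \<and>
      (1 \<le> T - 0 \<longrightarrow> fst (dp (T - 0) v k) \<le> 0) \<and>
      (\<forall>t. 1 \<le> t \<and> t \<le> T - 0 \<longrightarrow> backtrack T ws Gamma t = backtrack (T - 0) v k t)"
    using ws post(2,3) last loaded Gamma_le unfolding optimal_last_def consts_loaded_def by auto
  moreover have "\<forall>a\<ge>0. M' a = mem_scen ws 0 a" using frame mem by (simp add: mem_scen_def)
  ultimately show "pc = 155 \<and> backtrack_inv ws 0 M'"
    using \<open>pc \<in> set [155]\<close> post(1,4) loaded by (simp add: backtrack_inv_def consts_loaded_def)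
qed

lemma backtrack_reads:
  assumes "1 \<le> t" "t \<le> T" "t \<le> T - i" "v < ncand" "k \<le> T" "\<forall>a\<ge>0. M a = mem_scen ws i a"
  shows "M (int cand_base + int v) = cand v" "M (int (3 * t + 4)) = Dhat t"
    "M (int table_base + 3 * int ((t * ncand + v) * nbud + k) + 2) = snd (snd (dp t v k))"
proof -
  have mem: "M a = mem_table (Suc T * layer_size) a" if "0 \<le> a" "a \<le> int scen_base" for a
    using assms(6) that mem_scen_below by simp
  show "M (int cand_base + int v) = cand v"
    using mem[of "int cand_base + int v"] assms(4) mem_table_below mem_cands_cand bases_above_input(2)
    by (simp add: scen_base_def)
  have "int (3 * t + 4) < int cand_base" using assms(2) by (simp add: cand_base_def)
  then show "M (int (3 * t + 4)) = Dhat t"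
    using mem[of "int (3 * t + 4)"] mem_table_below mem_cands_below mem_in_period(2)[OF assms(1,2)]
      bases_above_input(2) by (simp add: scen_base_def)
  define j where "j = (t * ncand + v) * nbud + k"
  have "j < Suc T * layer_size"
  proof -
    have "j < (t * ncand + v + 1) * nbud" using assms(5) by (simp add: j_def nbud_def)
    also have "\<dots> \<le> (T * ncand + ncand) * nbud"
    proof (rule mult_right_mono)
      have "t * ncand \<le> T * ncand" using assms(2) by simp
      then show "t * ncand + v + 1 \<le> T * ncand + ncand" using assms(4) by linarith
    qed simp
    finally show ?thesis by (simp add: layer_size_def algebra_simps)
  qed
  moreover have "k < nbud" using assms(5) by (simp add: nbud_def)
  then have "cell_t j = t" "cell_v j = v" "cell_k j = k" using cell_of[OF assms(4)] by (simp_all add: j_def)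
  moreover obtain f b c where "dp t v k = (f, b, c)" by (cases "dp t v k")
  moreover have "int scen_base + int T < int table_base + 3 * int j + 2" by (simp add: table_base_def nbud_def)
  ultimately show "M (int table_base + 3 * int ((t * ncand + v) * nbud + k) + 2) = snd (snd (dp t v k))"
    using assms(6) mem_table_cell(3)[of j "Suc T * layer_size"] unfolding j_def[symmetric] by (simp add: mem_scen_def)
qed

lemma backtrack_step:
  assumes i: "i < T" and inv: "backtrack_inv ws i M"
  shows "reaches_within adversary_ram 155 M 30 (\<lambda>pc M'. pc = 155 \<and> backtrack_inv ws (Suc i) M')"
proof -
  define t where "t = T - i"
  have t: "1 \<le> t" "t \<le> T" "t \<le> T - i" using i by (simp_all add: t_def)
  obtain v k where vk: "M (-25) = real v" "M (-26) = real k" "v < ncand" "k \<le> T" "fst (dp t v k) \<le> 0"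
      "\<forall>t'. 1 \<le> t' \<and> t' \<le> t \<longrightarrow> backtrack T ws Gamma t' = backtrack t v k t'"
    using inv t(1) unfolding backtrack_inv_def t_def by blast
  have loaded: "consts_loaded M" and r: "M (-24) = real t" "M (-52) = real (scen_base + t)"
    and mem: "\<forall>a\<ge>0. M a = mem_scen ws i a" using inv unfolding backtrack_inv_def t_def by blast+
  obtain w where w: "w < ncand" "snd (snd (dp t v k)) = real w" "dev t v \<le> k" "fst (dp (t - 1) w (k - dev t v)) \<le> 0"
    "\<And>i. i \<le> t - 1 \<Longrightarrow> backtrack t v k i = backtrack (t - 1) w (k - dev t v) i"
    using dp_feasible_predecessor[OF t(1) vk(3,5)] by blast
  have "M (-7) = 1" "M (-8) = 0" "M (-9) = 3" "M (-10) = real ncand" "M (-11) = real nbud"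
    "M (-13) = real cand_base" "M (-14) = real table_base" using loaded by (simp_all add: consts_loaded_def)
  from ram_backtrack_step[OF this r(1) t(1) vk(1,2) r(2) backtrack_reads[OF t vk(3,4) mem]] show ?thesis
  proof (rule exec_until_reaches_within, elim conjE)
    fix pc :: nat and M' assume "pc \<in> set [155]" and post: "M' (-24) = real (t - 1)"
      "M' (-25) = snd (snd (dp t v k))" "M' (-26) = real k - (if cand v = Dhat t then 0 else 1)"
      "M' (-52) = real (scen_base + t) - 1" "\<forall>a\<ge>0. M' a = (M(int (scen_base + t) := cand v)) a"
      and frame: "\<forall>a<0. a \<notin> {-26, -25, -24, -32, -34, -35, -44, -45, -52, -53} \<longrightarrow> M' a = M a"
    have "consts_loaded M'" using frame by (intro consts_loaded_cong[OF loaded]) simp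
    moreover have "\<forall>a\<ge>0. M' a = mem_scen ws (Suc i) a"
      using post(5) mem mem_scen_Suc[OF i, of ws, symmetric] vk(6) t by (simp add: t_def)
    moreover have "\<exists>v k. M' (-25) = real v \<and> M' (-26) = real k \<and> v < ncand \<and> k \<le> T \<and>
        (1 \<le> T - Suc i \<longrightarrow> fst (dp (T - Suc i) v k) \<le> 0) \<and>
        (\<forall>t. 1 \<le> t \<and> t \<le> T - Suc i \<longrightarrow> backtrack T ws Gamma t = backtrack (T - Suc i) v k t)"
      using post(2,3) w vk(4,6) by (intro exI[of _ w] exI[of _ "k - dev t v"]) (auto simp: t_def dev_def of_nat_diff)
    ultimately show "pc = 155 \<and> backtrack_inv ws (Suc i) M'"
      using \<open>pc \<in> set [155]\<close> post(1,4) t by (simp add: backtrack_inv_def t_def of_nat_diff)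
  qed
qed

lemma backtrack_phase:
  assumes "optimal_last ws" "consts_loaded M" "\<forall>a\<ge>0. M a = mem_table (Suc T * layer_size) a" "M (-42) = real ws"
  shows "reaches_within adversary_ram 151 M (10 + (T * 30 + 2)) (\<lambda>pc M'. pc = 183 \<and> consts_loaded M' \<and>
    (\<forall>a\<ge>0. M' a = mem_scen ws T a))"
proof (rule reaches_within_trans[OF backtrack_init[OF assms]])
  fix pc :: nat and M1 assume "pc = 155 \<and> backtrack_inv ws 0 M1"
  moreover have "reaches_within adversary_ram 155 M' 2 (\<lambda>pc M'. pc = 183 \<and> consts_loaded M' \<and>
      (\<forall>a\<ge>0. M' a = mem_scen ws T a))" if "backtrack_inv ws T M'" for M'
  proof -
    have "M' (-7) = 1" "M' (-8) = 0" "M' (-24) = 0" using that by (simp_all add: backtrack_inv_def consts_loaded_def)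
    from ram_backtrack_exit[OF this] show ?thesis
      by (rule exec_until_reaches_within) (use that in \<open>simp add: backtrack_inv_def\<close>)
  qed
  ultimately show "reaches_within adversary_ram pc M1 (T * 30 + 2) (\<lambda>pc M'. pc = 183 \<and> consts_loaded M' \<and>
      (\<forall>a\<ge>0. M' a = mem_scen ws T a))"
    using reaches_within_loop[where I = "backtrack_inv ws", OF backtrack_step] by blast
qed


definition output_inv :: "nat \<Rightarrow> nat \<Rightarrow> (int \<Rightarrow> real) \<Rightarrow> bool" where
  "output_inv ws i M \<longleftrightarrow> M 0 = real (Suc i) \<and> M 1 = real T \<and> M 2 = real (scen_base + Suc i) \<and> M 4 = 1 \<and>
     M 5 = - real (Suc i) \<and> (\<forall>t. 1 \<le> t \<and> t \<le> i \<longrightarrow> M (- int t) = cand (backtrack T ws Gamma t)) \<and>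
     (\<forall>a\<ge>6. M a = mem_scen ws T a)"

lemma output_step:
  assumes i: "i < T" and inv: "output_inv ws i M"
  shows "reaches_within adversary_ram 188 M 10 (\<lambda>pc M'. pc = 188 \<and> output_inv ws (Suc i) M')"
proof -
  have "6 \<le> int (scen_base + Suc i)" by (simp add: scen_base_def cand_base_def)
  then have "M (int (scen_base + Suc i)) = mem_scen ws T (int (scen_base + Suc i))"
    using inv by (simp add: output_inv_def)
  also have "\<dots> = cand (backtrack T ws Gamma (Suc i))"
  proof -
    have "nat (int (scen_base + Suc i) - int scen_base) = Suc i" by simp
    then show ?thesis using i by (simp add: mem_scen_def)
  qed
  finally have "M (int (scen_base + Suc i)) = cand (backtrack T ws Gamma (Suc i))" .
  with inv i have "exec_until adversary_ram [188] 188 M 10 (\<lambda>pc M'. M' 0 = real (Suc (Suc i)) \<and>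
      M' 2 = real (Suc (scen_base + Suc i)) \<and> M' 5 = - real (Suc (Suc i)) \<and>
      M' (- int (Suc i)) = cand (backtrack T ws Gamma (Suc i)) \<and>
      (\<forall>a. a \<notin> {0, 2, 3, 5, - int (Suc i)} \<longrightarrow> M' a = M a))"
    unfolding output_inv_def by (intro ram_output_step[where T = T and t = "Suc i" and p = "scen_base + Suc i"]) simp_all
  then show ?thesis
  proof (rule exec_until_reaches_within, elim conjE)
    fix pc :: nat and M' assume "pc \<in> set [188]" and post: "M' 0 = real (Suc (Suc i))"
      "M' 2 = real (Suc (scen_base + Suc i))" "M' 5 = - real (Suc (Suc i))"
      "M' (- int (Suc i)) = cand (backtrack T ws Gamma (Suc i))"
      and frame: "\<forall>a. a \<notin> {0, 2, 3, 5, - int (Suc i)} \<longrightarrow> M' a = M a"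
    have "M' (- int t) = cand (backtrack T ws Gamma t)" if "1 \<le> t" "t \<le> Suc i" for t
      using inv frame post(4) that by (cases "t = Suc i") (auto simp: output_inv_def)
    then show "pc = 188 \<and> output_inv ws (Suc i) M'"
      using \<open>pc \<in> set [188]\<close> post(1-3) frame inv by (simp add: output_inv_def)
  qed
qed

lemma output_phase:
  assumes loaded: "consts_loaded M" and mem: "\<forall>a\<ge>0. M a = mem_scen ws T a"
  shows "reaches_within adversary_ram 183 M (10 + (T * 10 + 2))
    (\<lambda>pc M'. pc = 196 \<and> (\<forall>t\<in>{1..T}. M' (- int t) = cand (backtrack T ws Gamma t)))"
proof (rule exec_until_then[OF ram_output_init])
  show "M (-7) = 1" using loaded by (simp add: consts_loaded_def)
next
  fix pc :: nat and M1 assume "pc \<in> set [188]" and post: "M1 0 = 1 \<and> M1 1 = M (-1) \<and> M1 2 = M (-15) + 1 \<and>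
    M1 4 = 1 \<and> M1 5 = -1 \<and> (\<forall>a. a \<notin> {0, 1, 2, 4, 5} \<longrightarrow> M1 a = M a)"
  then have init: "output_inv ws 0 M1" using loaded mem by (simp add: output_inv_def consts_loaded_def)
  have exit: "reaches_within adversary_ram 188 M' 2
      (\<lambda>pc M'. pc = 196 \<and> (\<forall>t\<in>{1..T}. M' (- int t) = cand (backtrack T ws Gamma t)))" if "output_inv ws T M'" for M'
  proof -
    have "M' 0 = real (Suc T)" "M' 1 = real T" "M' 4 = 1" using that by (simp_all add: output_inv_def)
    from ram_output_exit[OF this(1,2) lessI this(3)] show ?thesis
      by (rule exec_until_reaches_within) (use that in \<open>auto simp: output_inv_def\<close>)
  qed
  show "reaches_within adversary_ram pc M1 (T * 10 + 2)
      (\<lambda>pc M'. pc = 196 \<and> (\<forall>t\<in>{1..T}. M' (- int t) = cand (backtrack T ws Gamma t)))"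
    using \<open>pc \<in> set [188]\<close> reaches_within_loop[where I = "output_inv ws", OF output_step exit init] by simp
qed

definition step_bound :: nat where
  "step_bound = (32 + (T * 20 + 2)) + ((30 + (T * layer_size * ((20 + (ncand * 20 + 1 + (20 + 20))) + 20) + 2)) +
     ((20 + (ncand * 20 + 1 + 2)) + ((10 + (T * 30 + 2)) + (10 + (T * 10 + 2)))))"

lemma adversary_ram_reaches_output:
  "reaches_within adversary_ram 0 mem_in step_bound (\<lambda>pc M. pc = 196 \<and>
     (\<exists>ws. optimal_last ws \<and> (\<forall>t\<in>{1..T}. M (- int t) = cand (backtrack T ws Gamma t))))"
  (is "reaches_within _ _ _ _ ?Q")
  unfolding step_bound_def
proof (rule reaches_within_trans[OF cands_phase], elim conjE)
  let ?table = "30 + (T * layer_size * ((20 + (ncand * 20 + 1 + (20 + 20))) + 20) + 2)"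
    and ?final = "20 + (ncand * 20 + 1 + 2)" and ?back = "10 + (T * 30 + 2)" and ?out = "10 + (T * 10 + 2)"
  fix pc :: nat and M1 assume "pc = 39" "cands_inv T M1"
  from table_phase[OF this(2)] show "reaches_within adversary_ram pc M1 (?table + (?final + (?back + ?out))) ?Q"
    unfolding \<open>pc = 39\<close>
  proof (rule reaches_within_trans, elim conjE)
    fix pc :: nat and M2 assume "pc = 141" "table_inv (Suc T * layer_size) M2"
    from final_scan_phase[OF this(2)] show "reaches_within adversary_ram pc M2 (?final + (?back + ?out)) ?Q"
      unfolding \<open>pc = 141\<close>
    proof (rule reaches_within_trans, unfold scan_finished_def, elim conjE exE)
      fix pc :: nat and M3 ws assume "pc = 151" "consts_loaded M3"
        "\<forall>a\<ge>0. M3 a = mem_table (Suc T * layer_size) a" "optimal_last ws" "M3 (-42) = real ws"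
      from backtrack_phase[OF this(4,2,3,5)] show "reaches_within adversary_ram pc M3 (?back + ?out) ?Q"
        unfolding \<open>pc = 151\<close>
      proof (rule reaches_within_trans, elim conjE)
        fix pc :: nat and M4 assume "pc = 183" "consts_loaded M4" "\<forall>a\<ge>0. M4 a = mem_scen ws T a"
        from output_phase[OF this(2,3)] show "reaches_within adversary_ram pc M4 ?out ?Q" unfolding \<open>pc = 183\<close>
          by (rule reaches_within_mono) (use \<open>optimal_last ws\<close> in auto)
      qed
    qed
  qed
qed

lemma adversary_ram_correct:
  "\<exists>n M. run adversary_ram (Running 0 mem_in) n = Halted M \<and> n \<le> step_bound + 1 \<and>
     output_scenario M \<in> scenarios \<and> (\<forall>D\<in>scenarios. obj D \<le> obj (output_scenario M))"
proof -
  obtain n M ws where run: "run adversary_ram (Running 0 mem_in) n = Running 196 M" "n \<le> step_bound"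
    and ws: "optimal_last ws" "\<forall>t\<in>{1..T}. M (- int t) = cand (backtrack T ws Gamma t)"
    using adversary_ram_reaches_output unfolding reaches_within_def by blast
  have "run adversary_ram (Running 0 mem_in) (n + 1) = Halted M"
    using run_add[of adversary_ram "Running 0 mem_in" n 1] run(1) ram_halt by simp
  moreover have "\<forall>t\<in>{1..T}. output_scenario M t = cand (backtrack T ws Gamma t)"
    using ws(2) by (simp add: output_scenario_def)
  ultimately show ?thesis using run(2) optimal_last_backtrack[OF ws(1)]
    by (intro exI[of _ "n + 1"] exI[of _ M]) auto
qed

lemma step_bound_le: "real (step_bound + 1) \<le> 1080 * real T ^ 4"
proof -
  have "step_bound + 1 = 180 * T ^ 4 + 423 * T ^ 3 + 243 * T ^ 2 + 120 * T + 114"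
    unfolding step_bound_def layer_size_def ncand_def nbud_def by (simp add: algebra_simps power_def)
  also have "\<dots> \<le> 180 * T ^ 4 + 423 * T ^ 4 + 243 * T ^ 4 + 120 * T ^ 4 + 114 * T ^ 4"
  proof -
    have "T ^ k \<le> T ^ 4" if "k \<le> 4" for k using power_increasing[OF that T_pos] .
    from this[of 3] this[of 2] this[of 1] this[of 0] show ?thesis by simp
  qed
  finally show ?thesis by (simp add: of_nat_le_iff[symmetric, where 'a = real])
qed

end

theorem theorem3:
  "\<exists>(P::prog) (c::real). \<forall>(T::nat) cP cI cB bP (Gamma::nat) x Dhat Delta.
     T \<ge> 1 \<and> Gamma \<le> T \<and>
     (\<forall>t\<in>{1..T}. 0 \<le> x t) \<and>
     (\<forall>t\<in>{1..T}. 0 \<le> Dhat t) \<and>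
     (\<forall>t\<in>{1..<T}. Dhat t \<le> Dhat (Suc t)) \<and>
     (\<forall>t\<in>{1..T}. 0 \<le> Delta t \<and> Delta t \<le> Dhat t)
     \<longrightarrow>
     (\<exists>n M. run P (Running 0 (input_mem T cP cI cB bP Gamma x Dhat Delta)) n = Halted M \<and>
            real n \<le> c * real T ^ 4 \<and>
            output_scenario M \<in> Ud T Dhat Delta Gamma \<and>
            (\<forall>D\<in>Ud T Dhat Delta Gamma.
               adv_obj T cP cI cB bP x D \<le> adv_obj T cP cI cB bP x (output_scenario M)))"
proof (rule exI[of _ adversary_ram], rule exI[of _ 1080], intro allI impI, elim conjE)
  fix T Gamma :: nat and cP cI cB bP :: real and x Dhat Delta :: "nat \<Rightarrow> real"
  assume "T \<ge> 1" "Gamma \<le> T" "\<forall>t\<in>{1..T}. 0 \<le> Dhat t" "\<forall>t\<in>{1..<T}. Dhat t \<le> Dhat (Suc t)"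
    "\<forall>t\<in>{1..T}. 0 \<le> Delta t \<and> Delta t \<le> Dhat t"
  then interpret production_instance T cP cI cB bP Gamma x Dhat Delta
    by unfold_locales
  obtain n M where "run adversary_ram (Running 0 mem_in) n = Halted M" "n \<le> step_bound + 1"
    "output_scenario M \<in> scenarios" "\<forall>D\<in>scenarios. obj D \<le> obj (output_scenario M)"
    using adversary_ram_correct by blast
  moreover have "real n \<le> 1080 * real T ^ 4"
    using \<open>n \<le> step_bound + 1\<close> step_bound_le by (meson of_nat_le_iff order_trans)
  ultimately show "\<exists>n M. run adversary_ram (Running 0 (input_mem T cP cI cB bP Gamma x Dhat Delta)) n = Halted M \<and>
      real n \<le> 1080 * real T ^ 4 \<and> output_scenario M \<in> Ud T Dhat Delta Gamma \<and>
      (\<forall>D\<in>Ud T Dhat Delta Gamma. adv_obj T cP cI cB bP x D \<le> adv_obj T cP cI cB bP x (output_scenario M))"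
    unfolding mem_in_def by blast
qed

end
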